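(* Let $N\ge2$ be even, $\chi$ a primitive Dirichlet character modulo $N$, and $\overline\gamma_\chi=\operatorname{Ind}_{\overline\Gamma_\theta\cap\overline\Gamma_0(N^2)}^{\overline\Gamma_0(N^2)}\overline\lambda_\chi^{-1}$. (1) If $N\equiv2\pmod4$, then $\overline\gamma_\chi$ is an irreducible representation of dimension $2$. (2) If $N\equiv0\pmod4$, then $\overline\gamma_\chi$ is a reducible representation of dimension $2$ whose two irreducible components are non-isomorphic.
   Context: Hilbert symbol $(x,y)_{\mathbb R}=-1$ if $x<0,y<0$, else $1$. For $g=\begin{pmatrix}a&b\\c&d\end{pmatrix}\in SL_2(\mathbb R)$, $x(g)=d$ if $c=0$ and $x(g)=c$ otherwise; $\bar c(g_1,g_2)=(x(g_1),x(g_2))_{\mathbb R}(-x(g_1)x(g_2),x(g_1g_2))_{\mathbb R}$; $\overline{SL}_2(\mathbb R)=SL_2(\mathbb R)\times\{\pm1\}$ with $(g_1,\epsilon_1)(g_2,\epsilon_2)=(g_1g_2,\bar c(g_1,g_2)\epsilon_1\epsilon_2)$; $\overline\Gamma$ = preimage of $\Gamma$. Kronecker symbol with $\left(\frac01\right)=1,\left(\frac0{-1}\right)=-1$; $\epsilon_d=1$ or $i$ as $d\equiv1$ or $3\pmod 4$. $\omega=\begin{pmatrix}0&-1\\1&0\end{pmatrix}$, $\Gamma(2)=\{g\equiv I\bmod 2\}$, $\Gamma_\theta=\{g\in SL_2(\mathbb Z):ac\equiv bd\equiv0\bmod2\}=\Gamma(2)\sqcup\Gamma(2)\omega$, $\Gamma_0(M)=\{M\mid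 c\}$. $\lambda(r)=\left(\frac{2c}{d}\right)\epsilon_d^{-1}$ for $r\in\Gamma(2)$; for $r=r_1\omega$, $r_1=\begin{pmatrix}a_1&b_1\\c_1&d_1\end{pmatrix}\in\Gamma(2)$, $\lambda(r)=\left(\frac{2c_1}{d_1}\right)\epsilon_{d_1}^{-1}e^{-i\pi/4}(-c_1,d_1)_{\mathbb R}$. $\overline\lambda_\chi((r,\epsilon))=\lambda(r)\chi(d)\epsilon$ is a character of $\overline\Gamma_\theta\cap\overline\Gamma_0(N^2)$, which has index $2$ in $\overline\Gamma_0(N^2)$. *)

theory Defs
  imports Complex_Main "HOL-Library.Function_Algebras" "HOL-Number_Theory.Number_Theory"
    "HOL-Algebra.Group"
begin

text \<open>A 2x2 integer matrix (a,b,c,d) stands for [[a,b],[c,d]].\<close>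
type_synonym mat2 = "int \<times> int \<times> int \<times> int"
type_synonym mp = "mat2 \<times> int"   (* (g, epsilon) with epsilon in {1,-1} *)

fun mmul :: "mat2 \<Rightarrow> mat2 \<Rightarrow> mat2" where
  "mmul (a,b,c,d) (a',b',c',d') = (a*a'+b*c', a*b'+b*d', c*a'+d*c', c*b'+d*d')"

fun mdet :: "mat2 \<Rightarrow> int" where "mdet (a,b,c,d) = a*d - b*c"

definition SL2Z :: "mat2 set" where "SL2Z = {g. mdet g = 1}"

definition hilb :: "real \<Rightarrow> real \<Rightarrow> int" where
  "hilb x y = (if x < 0 \<and> y < 0 then -1 else 1)"

fun xfun :: "mat2 \<Rightarrow> int" where
  "xfun (a,b,c,d) = (if c = 0 then d else c)"

definition cbar :: "mat2 \<Rightarrow> mat2 \<Rightarrow> int" where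
  "cbar g1 g2 = hilb (xfun g1) (xfun g2) * hilb (- (xfun g1 * xfun g2)) (xfun (mmul g1 g2))"

fun mp_mult :: "mp \<Rightarrow> mp \<Rightarrow> mp" where
  "mp_mult (g1,e1) (g2,e2) = (mmul g1 g2, cbar g1 g2 * e1 * e2)"

definition Gamma0 :: "int \<Rightarrow> mat2 set" where
  "Gamma0 M = {(a,b,c,d). mdet (a,b,c,d) = 1 \<and> M dvd c}"

definition Gamma2 :: "mat2 set" where
  "Gamma2 = {(a,b,c,d). mdet (a,b,c,d) = 1 \<and> [a = 1] (mod 2) \<and> [b = 0] (mod 2)
                         \<and> [c = 0] (mod 2) \<and> [d = 1] (mod 2)}"

definition Gamma_theta :: "mat2 set" where
  "Gamma_theta = {(a,b,c,d). mdet (a,b,c,d) = 1 \<and> 2 dvd a*c \<and> 2 dvd b*d}"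

definition omega :: mat2 where "omega = (0,-1,1,0)"
definition omega_inv :: mat2 where "omega_inv = (0,1,-1,0)"

text \<open>The preimage in the metaplectic group of a subgroup of SL2(Z), as a HOL-Algebra monoid.\<close>
definition mp_group :: "mat2 set \<Rightarrow> mp monoid" where
  "mp_group S = \<lparr>carrier = {(g,e). g \<in> S \<and> e \<in> {1,-1}}, mult = mp_mult, one = ((1,0,0,1),1)\<rparr>"

definition jacobi :: "int \<Rightarrow> int \<Rightarrow> int" where
  "jacobi m n = (\<Prod>p\<in>prime_factors n. Legendre m p ^ multiplicity p n)"

text \<open>Kronecker symbol (m/n) for odd n, with (m/-1) = sign of m and the convention
  (0/1) = 1, (0/-1) = -1.\<close>
definition kron :: "int \<Rightarrow> int \<Rightarrow> int" where
  "kron m n = (if n > 0 then jacobi m n else jacobi m (-n) * (if m > 0 then 1 else -1))"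

definition eps :: "int \<Rightarrow> complex" where
  "eps d = (if [d = 1] (mod 4) then 1 else \<i>)"

fun lam_G2 :: "mat2 \<Rightarrow> complex" where
  "lam_G2 (a,b,c,d) = of_int (kron (2*c) d) * inverse (eps d)"

fun lam_G2w :: "mat2 \<Rightarrow> complex" where
  "lam_G2w (a1,b1,c1,d1) = of_int (kron (2*c1) d1) * inverse (eps d1)
       * exp (- \<i> * of_real pi / 4) * of_int (hilb (- c1) d1)"

text \<open>lambda on Gamma_theta = Gamma(2) \<union> Gamma(2) omega; in the second case r = r1 omega
  with r1 = r omega^{-1}.\<close>
definition lam :: "mat2 \<Rightarrow> complex" where
  "lam r = (if r \<in> Gamma2 then lam_G2 r else lam_G2w (mmul r omega_inv))"

fun dcoef :: "mat2 \<Rightarrow> int" where "dcoef (a,b,c,d) = d"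

definition lam_bar :: "(int \<Rightarrow> complex) \<Rightarrow> mp \<Rightarrow> complex" where
  "lam_bar \<chi> h = lam (fst h) * \<chi> (dcoef (fst h)) * of_int (snd h)"

definition dirichlet_char :: "int \<Rightarrow> (int \<Rightarrow> complex) \<Rightarrow> bool" where
  "dirichlet_char N \<chi> \<longleftrightarrow> N \<ge> 1 \<and> \<chi> 1 = 1 \<and> (\<forall>m n. \<chi> (m*n) = \<chi> m * \<chi> n)
     \<and> (\<forall>n. \<chi> (n + N) = \<chi> n) \<and> (\<forall>n. \<chi> n = 0 \<longleftrightarrow> \<not> coprime n N)"

definition primitive_dirichlet_char :: "int \<Rightarrow> (int \<Rightarrow> complex) \<Rightarrow> bool" where
  "primitive_dirichlet_char N \<chi> \<longleftrightarrow> dirichlet_char N \<chi> \<and>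
     (\<forall>M. M > 0 \<and> M dvd N \<and> M < N \<longrightarrow>
        (\<exists>n. coprime n N \<and> [n = 1] (mod M) \<and> \<chi> n \<noteq> 1))"

definition fsc :: "complex \<Rightarrow> ('g \<Rightarrow> complex) \<Rightarrow> ('g \<Rightarrow> complex)" where
  "fsc c f = (\<lambda>x. c * f x)"

text \<open>Model of Ind_H^G psi: functions f on G with f(hx) = psi(h) f(x), G acting by right translation.\<close>
definition ind_space :: "('g,'m) monoid_scheme \<Rightarrow> 'g set \<Rightarrow> ('g \<Rightarrow> complex) \<Rightarrow> ('g \<Rightarrow> complex) set" where
  "ind_space G H \<psi> = {f. (\<forall>x. x \<notin> carrier G \<longrightarrow> f x = 0) \<and>
       (\<forall>h\<in>H. \<forall>x\<in>carrier G. f (h \<otimes>\<^bsub>G\<^esub> x) = \<psi> h * f x)}"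

definition ind_act :: "('g,'m) monoid_scheme \<Rightarrow> 'g \<Rightarrow> ('g \<Rightarrow> complex) \<Rightarrow> ('g \<Rightarrow> complex)" where
  "ind_act G g f = (\<lambda>x. if x \<in> carrier G then f (x \<otimes>\<^bsub>G\<^esub> g) else 0)"

definition complex_rep :: "('g,'m) monoid_scheme \<Rightarrow> ('g \<Rightarrow> ('b \<Rightarrow> complex) \<Rightarrow> ('b \<Rightarrow> complex)) \<Rightarrow> ('b \<Rightarrow> complex) set \<Rightarrow> bool"
  where "complex_rep G \<rho> V \<longleftrightarrow> module.subspace fsc V \<and>
     (\<forall>g\<in>carrier G. \<forall>v\<in>V. \<rho> g v \<in> V) \<and>
     (\<forall>g\<in>carrier G. \<forall>v\<in>V. \<forall>w\<in>V. \<rho> g (v + w) = \<rho> g v + \<rho> g w) \<and>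
     (\<forall>g\<in>carrier G. \<forall>c. \<forall>v\<in>V. \<rho> g (fsc c v) = fsc c (\<rho> g v)) \<and>
     (\<forall>v\<in>V. \<rho> \<one>\<^bsub>G\<^esub> v = v) \<and>
     (\<forall>g\<in>carrier G. \<forall>h\<in>carrier G. \<forall>v\<in>V. \<rho> (g \<otimes>\<^bsub>G\<^esub> h) v = \<rho> g (\<rho> h v))"

definition invariant_subspace :: "('g,'m) monoid_scheme \<Rightarrow> ('g \<Rightarrow> ('b \<Rightarrow> complex) \<Rightarrow> ('b \<Rightarrow> complex)) \<Rightarrow> ('b \<Rightarrow> complex) set \<Rightarrow> ('b \<Rightarrow> complex) set \<Rightarrow> bool"
  where "invariant_subspace G \<rho> V W \<longleftrightarrow> W \<subseteq> V \<and> module.subspace fsc W \<and>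
     (\<forall>g\<in>carrier G. \<forall>w\<in>W. \<rho> g w \<in> W)"

definition irreducible_rep :: "('g,'m) monoid_scheme \<Rightarrow> ('g \<Rightarrow> ('b \<Rightarrow> complex) \<Rightarrow> ('b \<Rightarrow> complex)) \<Rightarrow> ('b \<Rightarrow> complex) set \<Rightarrow> bool"
  where "irreducible_rep G \<rho> V \<longleftrightarrow> V \<noteq> {0} \<and>
     (\<forall>W. invariant_subspace G \<rho> V W \<longrightarrow> W = {0} \<or> W = V)"

definition rep_iso :: "('g,'m) monoid_scheme \<Rightarrow> ('g \<Rightarrow> ('b \<Rightarrow> complex) \<Rightarrow> ('b \<Rightarrow> complex)) \<Rightarrow> ('b \<Rightarrow> complex) set \<Rightarrow> ('b \<Rightarrow> complex) set \<Rightarrow> bool"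
  where "rep_iso G \<rho> W1 W2 \<longleftrightarrow> (\<exists>T. bij_betw T W1 W2 \<and>
     (\<forall>v\<in>W1. \<forall>w\<in>W1. T (v + w) = T v + T w) \<and>
     (\<forall>c. \<forall>v\<in>W1. T (fsc c v) = fsc c (T v)) \<and>
     (\<forall>g\<in>carrier G. \<forall>v\<in>W1. T (\<rho> g v) = \<rho> g (T v)))"

definition rep_dim :: "('b \<Rightarrow> complex) set \<Rightarrow> nat" where
  "rep_dim V = vector_space.dim fsc V"

end

theory Submission
  imports Defs
begin

text \<open>
  The representation is induced from the character \<open>\<psi> = \<lambda>\<^sup>-\<^sup>1\<close> of a subgroup \<open>H\<close> of index two
  in \<open>G\<close>, with coset representative \<open>t = T = (1,1;0,1)\<close>. Such an induced space has a basis of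
  two functions supported on \<open>H\<close> and on \<open>H t\<close>; \<open>H\<close> acts on them through \<open>\<psi>\<close> and through its
  conjugate \<open>h \<mapsto> \<psi>(t h t\<^sup>-\<^sup>1)\<close>, while \<open>t\<close> exchanges them. It is irreducible as soon as the two
  characters differ, and otherwise splits into the eigenlines of \<open>t\<close> for \<open>1\<close> and \<open>-1\<close>.
  For \<open>h = (1,0;N\<^sup>2,1)\<close> one has \<open>t h t\<^sup>-\<^sup>1 = (1+N\<^sup>2, -N\<^sup>2; N\<^sup>2, 1-N\<^sup>2)\<close>, and the two characters
  differ by \<open>(2/(1-N\<^sup>2)) = -1\<close> when \<open>N \<equiv> 2 (mod 4)\<close>. When \<open>4 | N\<close>, conjugation by \<open>t\<close> only
  replaces \<open>d\<close> by \<open>d - c\<close> in the lower row, where \<open>c\<close> is divisible by \<open>16\<close> and by \<open>N\<close>, and this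
  leaves \<open>\<psi>\<close> unchanged.

  The real work is that \<open>\<lambda>\<close> is a character of \<open>H\<close> at all. On \<open>H\<close> it is the theta multiplier
  \<open>\<theta>(g) = (c/d) \<epsilon>\<^sub>d\<^sup>-\<^sup>1\<close> twisted by \<open>(2/d) \<chi>(d)\<close>, and \<open>\<theta>(gh) cbar(g,h) = \<theta>(g) \<theta>(h)\<close> on
  \<open>\<Gamma>\<^sub>0(4)\<close>. This is checked on the generators \<open>T\<^sup>\<plusminus>\<^sup>1\<close>, \<open>(1,0;\<plusminus>4,1)\<close>, \<open>-I\<close> using the
  periodicity of the Kronecker symbol \<open>(c/\<cdot>)\<close> modulo \<open>c\<close> (a consequence of quadratic
  reciprocity), and propagated to all of \<open>\<Gamma>\<^sub>0(4)\<close> by the cocycle identity of \<open>cbar\<close>. The cocycle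
  identity in turn expresses additivity of the winding of \<open>Arg\<close> in the chain rule
  \<open>j(gh,z) = j(g,hz) j(h,z)\<close> for the automorphy factor \<open>j(g,z) = cz + d\<close>.
\<close>

section \<open>Jacobi and Kronecker symbols\<close>

text \<open>For odd arguments, \<open>chi4 n = (-1/n)\<close>, \<open>chi8 n = (2/n)\<close> and
  \<open>qr_sign m n = (-1)^((m-1)/2 \<cdot> (n-1)/2)\<close>.\<close>

definition chi4 :: "int \<Rightarrow> int" where
  "chi4 n = (if n mod 4 = 1 then 1 else -1)"

definition chi8 :: "int \<Rightarrow> int" where
  "chi8 n = (if n mod 8 = 1 \<or> n mod 8 = 7 then 1 else -1)"

definition qr_sign :: "int \<Rightarrow> int \<Rightarrow> int" where
  "qr_sign m n = (if m mod 4 = 3 \<and> n mod 4 = 3 then -1 else 1)"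

lemma odd_mod_4_cases: "odd (m::int) \<Longrightarrow> m mod 4 = 1 \<or> m mod 4 = 3"
  by presburger

lemma odd_mod_8_cases: "odd (m::int) \<Longrightarrow> m mod 8 = 1 \<or> m mod 8 = 3 \<or> m mod 8 = 5 \<or> m mod 8 = 7"
  by presburger

lemma chi4_mult: "odd m \<Longrightarrow> odd n \<Longrightarrow> chi4 (m * n) = chi4 m * chi4 n"
proof -
  assume "odd m" "odd n"
  have "chi4 (m * n) = chi4 ((m mod 4) * (n mod 4))" by (simp add: chi4_def mod_mult_eq)
  then show ?thesis
    using odd_mod_4_cases[OF \<open>odd m\<close>] odd_mod_4_cases[OF \<open>odd n\<close>]
    by (elim disjE) (simp_all add: chi4_def)
qed

lemma chi4_uminus: "odd n \<Longrightarrow> chi4 (- n) = - chi4 n"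
  using odd_mod_4_cases[of n] by (auto simp: chi4_def zmod_zminus1_eq_if)

lemma chi4_square [simp]: "chi4 n * chi4 n = 1"
  by (simp add: chi4_def)

lemma chi8_mult: "odd m \<Longrightarrow> odd n \<Longrightarrow> chi8 (m * n) = chi8 m * chi8 n"
proof -
  assume "odd m" "odd n"
  have "chi8 (m * n) = chi8 ((m mod 8) * (n mod 8))" by (simp add: chi8_def mod_mult_eq)
  then show ?thesis
    using odd_mod_8_cases[OF \<open>odd m\<close>] odd_mod_8_cases[OF \<open>odd n\<close>]
    by (elim disjE) (simp_all add: chi8_def)
qed

lemma chi8_cong: "[m = n] (mod 8) \<Longrightarrow> chi8 m = chi8 n"
  by (simp add: chi8_def cong_def)

lemma chi8_uminus: "chi8 (- n) = chi8 n"
  by (auto simp: chi8_def zmod_zminus1_eq_if)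

lemma chi8_abs: "chi8 \<bar>n\<bar> = chi8 n"
  by (cases "n < 0") (auto simp: chi8_uminus)

lemma chi8_square [simp]: "chi8 n * chi8 n = 1"
  by (simp add: chi8_def)

lemma qr_sign_commute: "qr_sign m n = qr_sign n m"
  by (auto simp: qr_sign_def)

lemma qr_sign_mult_right: "odd m \<Longrightarrow> odd n \<Longrightarrow> qr_sign k (m * n) = qr_sign k m * qr_sign k n"
proof -
  assume "odd m" "odd n"
  have "qr_sign k (m * n) = qr_sign k ((m mod 4) * (n mod 4))" by (simp add: qr_sign_def mod_mult_eq)
  then show ?thesis
    using odd_mod_4_cases[OF \<open>odd m\<close>] odd_mod_4_cases[OF \<open>odd n\<close>]
    by (elim disjE) (simp_all add: qr_sign_def)
qed

lemma qr_sign_mult_left: "odd m \<Longrightarrow> odd n \<Longrightarrow> qr_sign (m * n) k = qr_sign m k * qr_sign n k"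
  using qr_sign_mult_right[of m n k] by (simp add: qr_sign_commute)

lemma qr_sign_uminus_right: "odd u \<Longrightarrow> odd n \<Longrightarrow> qr_sign u (- n) * chi4 u = qr_sign u n"
  using odd_mod_4_cases[of u] odd_mod_4_cases[of n]
  by (auto simp: chi4_def qr_sign_def zmod_zminus1_eq_if)

lemma chi8_step:
  assumes "odd n"
  shows "chi4 n * qr_sign (n - 2) n * chi8 (n - 2) = chi8 n"
proof -
  have m8: "(n - 2) mod 8 = (n mod 8 - 2) mod 8" by (simp add: mod_diff_left_eq)
  have m4: "k mod 4 = k mod 8 mod 4" for k :: int by (simp add: mod_mod_cancel)
  show ?thesis
    using odd_mod_8_cases[OF assms] m8 m4[of n] m4[of "n - 2"]
    by (elim disjE) (simp_all add: chi4_def qr_sign_def chi8_def)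
qed

lemma cong_sign_eq:
  fixes x y p :: int
  assumes "x \<in> {-1, 0, 1}" "y \<in> {-1, 0, 1}" "p > 2" "[x = y] (mod p)"
  shows "x = y"
proof (rule ccontr)
  assume "x \<noteq> y"
  moreover have "p dvd x - y" using assms(4) by (simp add: cong_iff_dvd_diff)
  ultimately have "\<bar>p\<bar> \<le> \<bar>x - y\<bar>" by (intro dvd_imp_le_int) auto
  with assms(1-3) show False by auto
qed

lemma Legendre_range: "Legendre a p \<in> {-1, 0, 1}"
  by (simp add: Legendre_def)

lemma Legendre_cong:
  assumes "[a = b] (mod p)"
  shows "Legendre a p = Legendre b p"
proof -
  have "[a = 0] (mod p) \<longleftrightarrow> [b = 0] (mod p)" "QuadRes p a \<longleftrightarrow> QuadRes p b"
    using assms unfolding QuadRes_def by (metis cong_sym cong_trans)+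
  then show ?thesis by (simp add: Legendre_def)
qed

lemma Legendre_one: "prime (p::int) \<Longrightarrow> Legendre 1 p = 1"
  using prime_gt_1_int[of p] by (auto simp: Legendre_def cong_0_iff QuadRes_def intro: exI[of _ 1])

lemma Legendre_unit: "prime (p::int) \<Longrightarrow> \<not> p dvd a \<Longrightarrow> Legendre a p \<in> {-1, 1}"
  by (auto simp: Legendre_def cong_0_iff)

lemma euler_criterion_int:
  fixes p :: int
  assumes "prime p" "p > 2"
  shows "[Legendre a p = a ^ nat ((p - 1) div 2)] (mod p)"
proof -
  have "prime (nat p)" "2 < nat p" using assms prime_nat_iff_prime by auto
  moreover have "(nat p - 1) div 2 = nat ((p - 1) div 2)"
    using assms by (simp add: nat_div_distrib nat_diff_distrib)
  ultimately show ?thesis using euler_criterion[of "nat p" a] assms by simp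
qed

lemma Legendre_mult:
  fixes p :: int
  assumes "prime p" "p > 2"
  shows "Legendre (a * b) p = Legendre a p * Legendre b p"
proof -
  have "[Legendre (a * b) p = Legendre a p * Legendre b p] (mod p)"
    using euler_criterion_int[OF assms, of "a * b"] cong_mult[OF euler_criterion_int[OF assms, of a]
        euler_criterion_int[OF assms, of b]]
    by (metis cong_sym cong_trans power_mult_distrib)
  moreover have "Legendre a p * Legendre b p \<in> {-1, 0, 1}"
    using Legendre_range[of a p] Legendre_range[of b p] by auto
  ultimately show ?thesis using cong_sign_eq Legendre_range assms(2) by blast
qed

lemma even_half_iff: "odd (p::int) \<Longrightarrow> even ((p - 1) div 2) \<longleftrightarrow> p mod 4 = 1"
  by presburger

lemma Legendre_minus_one:
  fixes p :: int
  assumes "prime p" "p > 2"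
  shows "Legendre (-1) p = chi4 p"
proof -
  have "odd p" using assms prime_odd_int by blast
  then have "(-1::int) ^ nat ((p - 1) div 2) = chi4 p"
    using even_half_iff[of p] assms(2) by (auto simp: chi4_def even_nat_iff)
  then have "[Legendre (-1) p = chi4 p] (mod p)"
    using euler_criterion_int[OF assms, of "-1"] by simp
  moreover have "chi4 p \<in> {-1, 0, 1}" by (simp add: chi4_def)
  ultimately show ?thesis using cong_sign_eq[OF Legendre_range] assms(2) by blast
qed

lemma Legendre_reciprocity:
  fixes p q :: int
  assumes "prime p" "p > 2" "prime q" "q > 2" "p \<noteq> q"
  shows "Legendre p q * Legendre q p = qr_sign p q"
proof -
  have "prime (nat p)" "prime (nat q)" using assms prime_nat_iff_prime by auto
  then have QR: "Legendre p q * Legendre q p = (-1) ^ nat ((p - 1) div 2 * ((q - 1) div 2))"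
    using Quadratic_Reciprocity_int[of p q] assms by blast
  have "odd p" "odd q" using assms prime_odd_int by blast+
  then have "even (nat ((p - 1) div 2 * ((q - 1) div 2))) \<longleftrightarrow> p mod 4 = 1 \<or> q mod 4 = 1"
    using even_half_iff[of p] even_half_iff[of q] assms by (simp add: even_nat_iff)
  then show ?thesis
    using QR odd_mod_4_cases[OF \<open>odd p\<close>] odd_mod_4_cases[OF \<open>odd q\<close>]
    by (auto simp: qr_sign_def neg_one_even_power neg_one_odd_power)
qed

lemma jacobi_conv_prod_mset:
  "jacobi m n = prod_mset (image_mset (\<lambda>p. Legendre m p) (prime_factorization n))"
  unfolding jacobi_def image_prod_mset_multiplicity
  by (intro prod.cong refl) (simp add: count_prime_factorization_prime in_prime_factors_iff)

lemma jacobi_one_right [simp]: "jacobi m 1 = 1"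
  by (simp add: jacobi_conv_prod_mset)

lemma jacobi_prime_right: "prime p \<Longrightarrow> jacobi m p = Legendre m p"
  by (simp add: jacobi_conv_prod_mset prime_factorization_prime)

lemma jacobi_mult_right: "n1 \<noteq> 0 \<Longrightarrow> n2 \<noteq> 0 \<Longrightarrow> jacobi m (n1 * n2) = jacobi m n1 * jacobi m n2"
  by (simp add: jacobi_conv_prod_mset prime_factorization_mult)

lemma jacobi_uminus_right: "jacobi m (- n) = jacobi m n"
  using prime_factorization_normalize[of "- n"] prime_factorization_normalize[of n]
  by (simp add: jacobi_conv_prod_mset)

lemma jacobi_abs_right: "jacobi m \<bar>n\<bar> = jacobi m n"
  by (cases "n < 0") (simp_all add: jacobi_uminus_right)

lemma odd_prime_factor:
  fixes n :: int
  assumes "odd n" "p \<in># prime_factorization n"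
  shows "prime p" "p > 2"
proof -
  show "prime p" using assms(2) by (simp add: in_prime_factors_iff)
  moreover have "odd p" using assms in_prime_factors_imp_dvd dvd_trans by blast
  ultimately show "p > 2" using prime_ge_2_int[of p] by (cases "p = 2") auto
qed

lemma jacobi_mult_left: "odd n \<Longrightarrow> jacobi (a * b) n = jacobi a n * jacobi b n"
  unfolding jacobi_conv_prod_mset prod_mset.distrib[symmetric]
  by (intro arg_cong[where f = prod_mset] image_mset_cong Legendre_mult odd_prime_factor)

lemma jacobi_one_left [simp]: "jacobi 1 n = 1"
  unfolding jacobi_conv_prod_mset
  by (subst image_mset_cong[where g = "\<lambda>_. 1"]) (simp_all add: Legendre_one in_prime_factors_iff)

lemma jacobi_cong: "[a = b] (mod n) \<Longrightarrow> jacobi a n = jacobi b n"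
  unfolding jacobi_conv_prod_mset
  by (intro arg_cong[where f = prod_mset] image_mset_cong Legendre_cong)
    (metis cong_dvd_modulus in_prime_factors_imp_dvd)

lemma odd_pos_int_induct [consumes 2, case_names one prime_mult]:
  fixes n :: int
  assumes "n > 0" "odd n" "P 1"
    and "\<And>p x. prime p \<Longrightarrow> p > 2 \<Longrightarrow> x > 0 \<Longrightarrow> odd x \<Longrightarrow> P x \<Longrightarrow> P (p * x)"
  shows "P n"
proof -
  have "n > 0 \<longrightarrow> odd n \<longrightarrow> P n"
  proof (induction n rule: prime_divisors_induct)
    case (unit x)
    then show ?case using assms(3) zdvd1_eq[of x] by auto
  next
    case (factor p x)
    show ?case
    proof (intro impI)
      assume px: "p * x > 0" "odd (p * x)"
      have "p > 2" using factor(1) px(2) prime_ge_2_int[of p] by (cases "p = 2") auto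
      moreover have "x > 0" using px(1) \<open>p > 2\<close> by (simp add: zero_less_mult_iff)
      ultimately show "P (p * x)" using assms(4) factor px(2) by simp
    qed
  qed simp
  then show ?thesis using assms(1,2) by blast
qed

lemma jacobi_minus_one: "n > 0 \<Longrightarrow> odd n \<Longrightarrow> jacobi (-1) n = chi4 n"
proof (induction n rule: odd_pos_int_induct)
  case one
  then show ?case by (simp add: chi4_def)
next
  case (prime_mult p x)
  then show ?case
    by (simp add: jacobi_mult_right jacobi_prime_right Legendre_minus_one chi4_mult prime_odd_int)
qed

lemma jacobi_square: "n > 0 \<Longrightarrow> odd n \<Longrightarrow> coprime a n \<Longrightarrow> jacobi a n * jacobi a n = 1"
proof (induction n rule: odd_pos_int_induct)
  case one
  then show ?case by simp
next
  case (prime_mult p x)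
  have "\<not> p dvd a"
    using prime_mult(1,6) by (metis coprime_common_divisor coprime_mult_right_iff dvd_refl not_prime_unit)
  then have "Legendre a p \<in> {-1, 1}" using Legendre_unit prime_mult(1) by blast
  moreover have "jacobi a x * jacobi a x = 1" using prime_mult by simp
  ultimately show ?case
    using prime_mult by (auto simp: jacobi_mult_right jacobi_prime_right algebra_simps)
qed

lemma jacobi_reciprocity_prime:
  assumes "prime p" "p > 2"
  shows "n > 0 \<Longrightarrow> odd n \<Longrightarrow> coprime p n \<Longrightarrow> jacobi p n * jacobi n p = qr_sign p n"
proof (induction n rule: odd_pos_int_induct)
  case one
  then show ?case using assms by (simp add: jacobi_prime_right Legendre_one qr_sign_def)
next
  case (prime_mult q x)
  have "p \<noteq> q" using prime_mult(6) assms(1) by (auto simp: prime_int_iff)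
  have "jacobi p (q * x) * jacobi (q * x) p = (Legendre p q * Legendre q p) * (jacobi p x * jacobi x p)"
    using prime_mult assms
    by (simp add: jacobi_mult_right jacobi_prime_right Legendre_mult algebra_simps)
  also have "\<dots> = qr_sign p q * qr_sign p x"
    using Legendre_reciprocity[OF assms prime_mult(1,2) \<open>p \<noteq> q\<close>] prime_mult by simp
  also have "\<dots> = qr_sign p (q * x)"
    using qr_sign_mult_right[of q x p] prime_mult prime_odd_int[of q] by simp
  finally show ?case .
qed

lemma jacobi_reciprocity:
  assumes "n > 0" "odd n"
  shows "m > 0 \<Longrightarrow> odd m \<Longrightarrow> coprime m n \<Longrightarrow> jacobi m n * jacobi n m = qr_sign m n"
proof (induction m rule: odd_pos_int_induct)
  case one
  then show ?case by (simp add: qr_sign_def)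
next
  case (prime_mult p x)
  have "jacobi (p * x) n * jacobi n (p * x) = (jacobi p n * jacobi n p) * (jacobi x n * jacobi n x)"
    using prime_mult assms by (simp add: jacobi_mult_right jacobi_mult_left algebra_simps)
  also have "\<dots> = qr_sign p n * qr_sign x n"
    using jacobi_reciprocity_prime[OF prime_mult(1,2) assms] prime_mult by simp
  also have "\<dots> = qr_sign (p * x) n"
    using qr_sign_mult_left[of p x n] prime_mult prime_odd_int[of p] by simp
  finally show ?case .
qed

text \<open>The supplementary law for 2, obtained from reciprocity alone: modulo \<open>n\<close> we have
  \<open>2 = -(n - 2)\<close>, and \<open>n = 2\<close> modulo \<open>n - 2\<close>.\<close>
lemma jacobi_two: "n > 0 \<Longrightarrow> odd n \<Longrightarrow> jacobi 2 n = chi8 n"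
proof (induction "nat n" arbitrary: n rule: less_induct)
  case less
  show ?case
  proof (cases "n = 1")
    case True
    then show ?thesis by (simp add: chi8_def)
  next
    case False
    define m where "m = n - 2"
    have m: "m > 0" "odd m" "n = m + 2" using less.prems False unfolding m_def by presburger+
    have "coprime m n"
      using m by (simp add: coprime_iff_gcd_eq_1 flip: coprime_right_2_iff_odd)
    have "[2 = -1 * m] (mod n)" unfolding m(3) by (simp add: cong_iff_dvd_diff add.commute)
    then have "jacobi 2 n = chi4 n * jacobi m n"
      using jacobi_cong jacobi_mult_left[OF less.prems(2), of "-1" m] jacobi_minus_one less.prems
      by metis
    moreover have "[n = 2] (mod m)" unfolding m(3) by (simp add: cong_iff_dvd_diff)
    then have "jacobi n m = chi8 m"
      using jacobi_cong less.hyps[of m] m by simp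
    moreover have "jacobi m n * jacobi n m = qr_sign m n"
      using jacobi_reciprocity less.prems m(1,2) \<open>coprime m n\<close> by blast
    ultimately have "jacobi 2 n = chi4 n * qr_sign (n - 2) n * chi8 (n - 2)"
      unfolding m_def by (metis chi8_square mult.assoc mult.commute mult_1_right)
    then show ?thesis using chi8_step[OF less.prems(2)] by simp
  qed
qed

lemma jacobi_two_abs: "odd n \<Longrightarrow> jacobi 2 \<bar>n\<bar> = chi8 n"
  using jacobi_two[of "\<bar>n\<bar>"] chi8_abs by (cases "n = 0") auto

definition kron_sign :: "int \<Rightarrow> int \<Rightarrow> int" where
  "kron_sign m n = (if n < 0 \<and> m \<le> 0 then -1 else 1)"

lemma kron_conv_jacobi: "n \<noteq> 0 \<Longrightarrow> kron m n = jacobi m n * kron_sign m n"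
  by (auto simp: kron_def kron_sign_def jacobi_uminus_right)

lemma kron_double_left:
  assumes "odd d"
  shows "kron (2 * c) d = chi8 d * kron c d"
proof -
  have "d \<noteq> 0" using assms by auto
  then show ?thesis
    using jacobi_two_abs[OF assms] jacobi_mult_left[OF assms, of 2 c]
    by (simp add: kron_conv_jacobi kron_sign_def jacobi_abs_right)
qed

lemma kron_reciprocity_odd:
  assumes "odd v" "odd k" "coprime v k"
  shows "kron v k = jacobi k v * ((if v < 0 then chi4 k else 1) * qr_sign \<bar>v\<bar> k)"
proof -
  define u where "u = \<bar>v\<bar>"
  have u: "u > 0" "odd u" and k: "\<bar>k\<bar> > 0" "odd \<bar>k\<bar>" using assms unfolding u_def by auto
  have "coprime u \<bar>k\<bar>" using assms(3) unfolding u_def by simp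
  have jvk: "jacobi v k = (if v < 0 then chi4 \<bar>k\<bar> else 1) * jacobi u k"
    using jacobi_mult_left[OF k(2), of "-1" u] jacobi_minus_one[OF k]
    by (auto simp: u_def jacobi_abs_right)
  have "jacobi u \<bar>k\<bar> * jacobi \<bar>k\<bar> u = qr_sign u \<bar>k\<bar>"
    using jacobi_reciprocity[OF k u] \<open>coprime u \<bar>k\<bar>\<close> by blast
  moreover have "jacobi \<bar>k\<bar> u * jacobi \<bar>k\<bar> u = 1"
    using jacobi_square[OF u] \<open>coprime u \<bar>k\<bar>\<close> by (simp add: coprime_commute)
  ultimately have "jacobi u k = qr_sign u \<bar>k\<bar> * jacobi \<bar>k\<bar> u"
    by (simp add: jacobi_abs_right) (metis mult.assoc mult.commute mult_1_right)
  also have "jacobi \<bar>k\<bar> u = (if k < 0 then chi4 u else 1) * jacobi k v"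
    using jacobi_mult_left[OF u(2), of "-1" k] jacobi_minus_one[OF u]
    by (simp add: u_def jacobi_abs_right)
  finally have juk: "jacobi u k = qr_sign u \<bar>k\<bar> * ((if k < 0 then chi4 u else 1) * jacobi k v)" .
  have sign: "(if v < 0 then chi4 \<bar>k\<bar> else 1) * qr_sign u \<bar>k\<bar> * (if k < 0 then chi4 u else 1)
      * kron_sign v k = (if v < 0 then chi4 k else 1) * qr_sign u k"
  proof (cases "k < 0")
    case True
    have "v \<noteq> 0" using assms(1) by auto
    then show ?thesis
      using True chi4_uminus[OF assms(2)] qr_sign_uminus_right[OF u(2) assms(2)]
      by (cases "v < 0") (simp_all add: kron_sign_def algebra_simps)
  next
    case False
    then show ?thesis by (simp add: kron_sign_def)
  qed
  have "kron v k = jacobi v k * kron_sign v k"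
    using assms(2) by (intro kron_conv_jacobi) auto
  also have "\<dots> = jacobi k v * ((if v < 0 then chi4 \<bar>k\<bar> else 1) * qr_sign u \<bar>k\<bar>
      * (if k < 0 then chi4 u else 1) * kron_sign v k)"
    unfolding jvk juk by (simp only: ac_simps)
  also have "\<dots> = jacobi k v * ((if v < 0 then chi4 k else 1) * qr_sign u k)"
    by (simp only: sign)
  finally show ?thesis unfolding u_def .
qed

lemma cong_odd_iff: "[m = n] (mod 2 * k) \<Longrightarrow> odd (m::int) \<longleftrightarrow> odd n"
  by (metis cong_dvd_modulus cong_iff_dvd_diff dvd_diff dvd_triv_left even_add diff_add_cancel)

text \<open>By reciprocity, \<open>(v/n)\<close> is \<open>(n/|v|)\<close> up to signs that depend only on \<open>n mod 4\<close>.\<close>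
lemma kron_periodic_odd:
  assumes "odd v" "odd n" "coprime v n" "[n' = n] (mod 4 * v)"
  shows "kron v n' = kron v n"
proof -
  have mod4: "[n' = n] (mod 4)" and modv: "[n' = n] (mod v)"
    using assms(4) cong_dvd_modulus[of n' n "4 * v"] by auto
  have "odd n'" using assms(2,4) cong_odd_iff[of n' n "2 * v"] by (simp add: mult.assoc)
  moreover have "coprime v n'"
    using assms(3) cong_imp_coprime[OF cong_sym[OF modv]] by (simp add: coprime_commute)
  moreover have "jacobi n' v = jacobi n v" using modv by (rule jacobi_cong)
  moreover have "chi4 n' = chi4 n" "qr_sign \<bar>v\<bar> n' = qr_sign \<bar>v\<bar> n"
    using mod4 unfolding cong_def chi4_def qr_sign_def by simp_all
  ultimately show ?thesis
    using kron_reciprocity_odd[of v n'] kron_reciprocity_odd[OF assms(1-3)] assms(1) by simp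
qed

text \<open>Halving \<open>w\<close> costs the factor \<open>(2/n)\<close>, which has period \<open>8\<close>.\<close>
lemma kron_periodic:
  assumes "odd n" "coprime w n" "[n' = n] (mod 4 * w)"
  shows "kron w n' = kron w n"
  using assms
proof (induction "nat \<bar>w\<bar>" arbitrary: w rule: less_induct)
  case less
  consider "w = 0" | "odd w" | w' where "w = 2 * w'" "w' \<noteq> 0" by (metis evenE mult_zero_right)
  then show ?case
  proof cases
    case 1
    then show ?thesis using less.prems(3) by simp
  next
    case 2
    then show ?thesis using kron_periodic_odd less.prems by blast
  next
    case 3
    have "[n' = n] (mod 4 * w')" "[n' = n] (mod 8)"
      using less.prems(3) 3(1) cong_dvd_modulus[of n' n "4 * w"] by auto
    moreover have "odd n'" using less.prems(1,3) cong_odd_iff[of n' n "2 * w"] by (simp add: mult.assoc)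
    moreover have "kron w' n' = kron w' n"
      using less.hyps[of w'] less.prems(1,2) 3 \<open>[n' = n] (mod 4 * w')\<close> by simp
    ultimately show ?thesis
      using 3(1) kron_double_left[of n' w'] kron_double_left[of n w'] less.prems(1) chi8_cong
      by simp
  qed
qed

lemma kron_periodic_mod:
  assumes "4 dvd c" "coprime c d" "[d' = d] (mod c)"
  shows "kron c d' = kron c d"
proof -
  obtain w where w: "c = 4 * w" using assms(1) by blast
  have "odd d" using assms(1,2) coprime_common_divisor[of c d 2] dvd_trans[of 2 4 c] by fastforce
  moreover have "odd d'" using calculation assms(3) cong_odd_iff[of d' d "2 * w"] w by simp
  moreover have "kron c k = kron w k" if "odd k" for k
    using kron_double_left[OF that, of "2 * w"] kron_double_left[OF that, of w] w
    by (simp add: mult.assoc)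
  ultimately show ?thesis using kron_periodic[of d w d'] assms(2,3) w by simp
qed

section \<open>Automorphy factors and the metaplectic cocycle\<close>

lemma mdet_mmul: "mdet (mmul g h) = mdet g * mdet h"
  by (cases g; cases h) (simp add: algebra_simps)

lemma mmul_assoc: "mmul (mmul g h) k = mmul g (mmul h k)"
  by (cases g; cases h; cases k) (simp add: algebra_simps)

lemma xfun_nonzero: "mdet g = 1 \<Longrightarrow> xfun g \<noteq> 0"
  by (cases g) auto

fun j_factor :: "mat2 \<Rightarrow> complex \<Rightarrow> complex" where
  "j_factor (a, b, c, d) z = of_int c * z + of_int d"

fun linfrac :: "mat2 \<Rightarrow> complex \<Rightarrow> complex" where
  "linfrac (a, b, c, d) z = (of_int a * z + of_int b) / (of_int c * z + of_int d)"

lemma j_factor_nonzero: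
  assumes "mdet g = 1" "Im z < 0"
  shows "j_factor g z \<noteq> 0"
proof -
  obtain a b c d where g: "g = (a, b, c, d)" by (cases g)
  show ?thesis
  proof (cases "c = 0")
    case True
    then show ?thesis using assms(1) g by auto
  next
    case False
    then have "Im (j_factor g z) \<noteq> 0" using assms(2) g by simp
    then show ?thesis by auto
  qed
qed

lemma Im_linfrac_neg:
  assumes "mdet g = 1" "Im z < 0"
  shows "Im (linfrac g z) < 0"
proof -
  obtain a b c d where g: "g = (a, b, c, d)" by (cases g)
  define x y where "x = Re z" and "y = Im z"
  have det: "real_of_int a * real_of_int d - real_of_int b * real_of_int c = 1"
    using assms(1) g by (metis mdet.simps of_int_1 of_int_diff of_int_mult)
  have "j_factor g z \<noteq> 0" using j_factor_nonzero assms by blast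
  then have "Re (j_factor g z) \<noteq> 0 \<or> Im (j_factor g z) \<noteq> 0" using complex_eq_iff by force
  then have den: "(c * x + d)\<^sup>2 + (c * y)\<^sup>2 > 0"
    using g unfolding x_def y_def by (auto simp: add_pos_nonneg add_nonneg_pos)
  have "Im (linfrac g z) = ((a * y) * (c * x + d) - (a * x + b) * (c * y)) / ((c * x + d)\<^sup>2 + (c * y)\<^sup>2)"
    using g unfolding x_def y_def by (simp add: Im_divide power2_eq_square)
  also have "(a * y) * (c * x + d) - (a * x + b) * (c * y) = y * (a * d - b * c)"
    by (simp add: algebra_simps)
  finally show ?thesis using den det assms(2) unfolding y_def by (simp add: divide_neg_pos)
qed

lemma j_factor_mmul:
  "j_factor h z \<noteq> 0 \<Longrightarrow> j_factor (mmul g h) z = j_factor g (linfrac h z) * j_factor h z"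
  by (cases g; cases h) (simp add: field_simps)

lemma linfrac_mmul:
  assumes "j_factor h z \<noteq> 0"
  shows "linfrac (mmul g h) z = linfrac g (linfrac h z)"
proof -
  obtain a b c d where g: "g = (a, b, c, d)" by (cases g)
  obtain a' b' c' d' where h: "h = (a', b', c', d')" by (cases h)
  define P W where "P = of_int a' * z + of_int b'" and "W = of_int c' * z + of_int d'"
  have W: "W \<noteq> 0" using assms h unfolding W_def by simp
  have "linfrac g (linfrac h z) = (of_int a * (P / W) + of_int b) / (of_int c * (P / W) + of_int d)"
    using g h unfolding P_def W_def by simp
  also have "\<dots> = ((of_int a * P + of_int b * W) / W) / ((of_int c * P + of_int d * W) / W)"
    using W by (simp add: field_simps)
  also have "\<dots> = (of_int a * P + of_int b * W) / (of_int c * P + of_int d * W)"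
    using W by simp
  also have "\<dots> = linfrac (mmul g h) z"
    using g h unfolding P_def W_def by (simp add: algebra_simps)
  finally show ?thesis by simp
qed

lemma Arg_neg_if_Im_neg:
  assumes "Im z < 0"
  shows "Arg z < 0"
proof (rule ccontr)
  assume "\<not> Arg z < 0"
  then have "0 \<le> sin (Arg z)" using sin_ge_zero Arg_bounded[of z] by simp
  moreover have "z \<noteq> 0" using assms by auto
  then have "sin (Arg z) = Im z / cmod z" by (rule sin_Arg)
  moreover have "Im z / cmod z < 0" using assms \<open>z \<noteq> 0\<close> by (simp add: divide_neg_pos)
  ultimately show False by simp
qed

lemma Arg_pos_if_Im_pos:
  assumes "Im z > 0"
  shows "Arg z > 0"
proof (rule ccontr)
  assume "\<not> Arg z > 0"
  then have "0 \<le> - Arg z" "- Arg z \<le> pi" using Arg_bounded[of z] by auto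
  then have "0 \<le> sin (- Arg z)" using sin_ge_zero by blast
  moreover have "z \<noteq> 0" using assms by auto
  then have "sin (Arg z) = Im z / cmod z" by (rule sin_Arg)
  moreover have "Im z / cmod z > 0" using assms \<open>z \<noteq> 0\<close> by simp
  ultimately show False by simp
qed

lemma Arg_of_real: "r \<noteq> 0 \<Longrightarrow> Arg (complex_of_real r) = (if r < 0 then pi else 0)"
  by (rule cis_Arg_unique) (auto simp: sgn_of_real complex_eq_iff)

text \<open>On the lower half-plane the sign of \<open>x(g)\<close> is read off from the argument of the
  automorphy factor; this turns the Hilbert symbols in \<open>cbar\<close> into a statement about arguments.\<close>
lemma xfun_pos_iff_Arg_j_factor:
  assumes "mdet g = 1" "Im z < 0"
  shows "0 < xfun g \<longleftrightarrow> Arg (j_factor g z) \<le> 0"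
proof -
  obtain a b c d where g: "g = (a, b, c, d)" by (cases g)
  show ?thesis
  proof (cases "c = 0")
    case True
    then have "d \<noteq> 0" "j_factor g z = of_real (of_int d)" using assms(1) g by auto
    then show ?thesis using True g Arg_of_real[of "of_int d"] by (auto simp: not_le)
  next
    case False
    then have "Im (j_factor g z) < 0 \<longleftrightarrow> c > 0" "Im (j_factor g z) > 0 \<longleftrightarrow> c < 0"
      using assms(2) g by (auto simp: mult_less_0_iff zero_less_mult_iff)
    then show ?thesis using False g Arg_neg_if_Im_neg[of "j_factor g z"] Arg_pos_if_Im_pos[of "j_factor g z"]
      by (cases "c > 0") auto
  qed
qed

lemma Arg_mult_winding:
  assumes "w \<noteq> 0" "z \<noteq> 0"
  shows "\<exists>m::int. Arg w + Arg z = Arg (w * z) + 2 * pi * m"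
proof -
  have "cis (Arg (w * z)) = cis (Arg w + Arg z)"
    using assms by (simp add: cis_Arg sgn_mult cis_mult[symmetric])
  then have "cis (Arg (w * z) - (Arg w + Arg z)) = 1"
    by (simp add: cis_divide[symmetric])
  then have "cos (Arg (w * z) - (Arg w + Arg z)) = 1"
    by (metis cis.sel(1) one_complex.sel(1))
  then obtain n :: int where "Arg (w * z) - (Arg w + Arg z) = of_int n * 2 * pi"
    using cos_one_2pi_int by blast
  then have "Arg w + Arg z = Arg (w * z) + 2 * pi * of_int (- n)" by (simp add: algebra_simps)
  then show ?thesis by blast
qed

lemma cbar_conv_xfun_sign:
  assumes "mdet g = 1" "mdet h = 1"
  shows "cbar g h = (if (0 < xfun g) = (0 < xfun h) \<and> (0 < xfun (mmul g h)) \<noteq> (0 < xfun g)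
    then -1 else 1)"
proof -
  have "xfun g \<noteq> 0" "xfun h \<noteq> 0" "xfun (mmul g h) \<noteq> 0"
    using assms xfun_nonzero mdet_mmul by auto
  then show ?thesis
    by (auto simp: cbar_def hilb_def mult_less_0_iff zero_less_mult_iff)
qed

lemma Arg_winding_parity:
  fixes \<alpha> \<beta> \<gamma> :: real and m :: int
  assumes "-pi < \<alpha>" "\<alpha> \<le> pi" "-pi < \<beta>" "\<beta> \<le> pi" "-pi < \<gamma>" "\<gamma> \<le> pi"
    and "\<alpha> + \<beta> = \<gamma> + 2 * pi * m"
  shows "(if (\<alpha> \<le> 0) = (\<beta> \<le> 0) \<and> (\<gamma> \<le> 0) \<noteq> (\<alpha> \<le> 0) then -1 else 1)
    = (if even m then 1 else (-1::int))"
proof -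
  have "2 * pi * m < 3 * pi" "- 3 * pi < 2 * pi * m" using assms by linarith+
  then have "pi * (2 * m) < pi * 3" "pi * (-3) < pi * (2 * m)" by (simp_all add: algebra_simps)
  then have "2 * m < (3::real)" "-3 < (2 * m :: real)" using pi_gt_zero mult_less_cancel_left_pos by blast+
  then have "m = -1 \<or> m = 0 \<or> m = 1" by linarith
  then show ?thesis using assms pi_gt_zero by (elim disjE) (simp_all, smt (verit))
qed

lemma cbar_conv_Arg:
  assumes "mdet g = 1" "mdet h = 1" "Im z < 0"
    and "Arg (j_factor g (linfrac h z)) + Arg (j_factor h z) = Arg (j_factor (mmul g h) z) + 2 * pi * m"
  shows "cbar g h = (if even m then 1 else -1)"
proof -
  have "Im (linfrac h z) < 0" using Im_linfrac_neg assms(2,3) by blast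
  then show ?thesis
    using cbar_conv_xfun_sign[OF assms(1,2)] Arg_winding_parity[OF _ _ _ _ _ _ assms(4)] Arg_bounded
      xfun_pos_iff_Arg_j_factor[OF assms(1)] xfun_pos_iff_Arg_j_factor[OF assms(2,3)]
      xfun_pos_iff_Arg_j_factor[of "mmul g h" z] assms(1-3)
    by (simp add: mdet_mmul)
qed

lemma Arg_j_factor_winding:
  assumes "mdet g = 1" "mdet h = 1" "Im z < 0"
  shows "\<exists>m::int. Arg (j_factor g (linfrac h z)) + Arg (j_factor h z)
    = Arg (j_factor (mmul g h) z) + 2 * pi * m"
  using Arg_mult_winding[OF j_factor_nonzero[OF assms(1) Im_linfrac_neg[OF assms(2,3)]]
      j_factor_nonzero[OF assms(2,3)]] j_factor_mmul[OF j_factor_nonzero[OF assms(2,3)]]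
  by simp

text \<open>\<open>cbar g h = (-1)^m\<close>, where \<open>2\<pi>m\<close> is the defect of \<open>Arg\<close> in \<open>j(gh,z) = j(g,hz) j(h,z)\<close>;
  the cocycle identity then follows from additivity of these defects.\<close>
theorem cbar_cocycle:
  assumes "mdet g = 1" "mdet h = 1" "mdet k = 1"
  shows "cbar g h * cbar (mmul g h) k = cbar g (mmul h k) * cbar h k"
proof -
  define z :: complex where "z = - \<i>"
  define w where "w = linfrac k z"
  have z: "Im z < 0" and w: "Im w < 0" using Im_linfrac_neg assms(3) by (auto simp: z_def w_def)
  have gh: "mdet (mmul g h) = 1" and hk: "mdet (mmul h k) = 1" using assms by (simp_all add: mdet_mmul)
  have hkz: "linfrac (mmul h k) z = linfrac h w"
    using linfrac_mmul j_factor_nonzero assms(2,3) z w unfolding w_def by blast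
  obtain m1 m2 m3 m4 :: int where
    m1: "Arg (j_factor g (linfrac h w)) + Arg (j_factor h w) = Arg (j_factor (mmul g h) w) + 2 * pi * m1" and
    m2: "Arg (j_factor (mmul g h) w) + Arg (j_factor k z) = Arg (j_factor (mmul (mmul g h) k) z) + 2 * pi * m2" and
    m3: "Arg (j_factor g (linfrac h w)) + Arg (j_factor (mmul h k) z) = Arg (j_factor (mmul g (mmul h k)) z) + 2 * pi * m3" and
    m4: "Arg (j_factor h w) + Arg (j_factor k z) = Arg (j_factor (mmul h k) z) + 2 * pi * m4"
    using Arg_j_factor_winding[OF assms(1,2) w] Arg_j_factor_winding[OF gh assms(3) z]
      Arg_j_factor_winding[OF assms(1) hk z] Arg_j_factor_winding[OF assms(2,3) z]
    unfolding hkz w_def by metis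
  have "2 * pi * (m1 + m2) = 2 * pi * (m3 + m4)"
    using m1 m2 m3 m4 unfolding mmul_assoc by (simp add: algebra_simps)
  then have "m1 + m2 = m3 + m4" by simp
  moreover have "cbar g h * cbar (mmul g h) k = (if even (m1 + m2) then 1 else -1)"
    using cbar_conv_Arg[OF assms(1,2) w m1] cbar_conv_Arg[OF gh assms(3) z m2[unfolded w_def]] by auto
  moreover have "cbar g (mmul h k) * cbar h k = (if even (m3 + m4) then 1 else -1)"
    using cbar_conv_Arg[OF assms(1) hk z m3[folded hkz]] cbar_conv_Arg[OF assms(2,3) z m4[unfolded w_def]]
    by auto
  ultimately show ?thesis by simp
qed

section \<open>The theta multiplier on \<open>\<Gamma>\<^sub>0(4)\<close>\<close>

lemma mem_Gamma0_iff [simp]: "(a, b, c, d) \<in> Gamma0 M \<longleftrightarrow> a * d - b * c = 1 \<and> M dvd c"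
  by (simp add: Gamma0_def)

lemma Gamma0_mdet: "g \<in> Gamma0 M \<Longrightarrow> mdet g = 1"
  by (cases g) simp

lemma Gamma0_mmul: "g \<in> Gamma0 M \<Longrightarrow> h \<in> Gamma0 M \<Longrightarrow> mmul g h \<in> Gamma0 M"
  by (cases g; cases h) (auto simp: algebra_simps)

lemma Gamma0_mono: "M dvd M' \<Longrightarrow> g \<in> Gamma0 M' \<Longrightarrow> g \<in> Gamma0 M"
  by (cases g) (auto intro: dvd_trans)

lemma coprime_if_det_one: "a * d - b * c = (1::int) \<Longrightarrow> coprime c d"
proof (rule coprimeI)
  fix k assume "a * d - b * c = 1" "k dvd c" "k dvd d"
  from \<open>k dvd c\<close> \<open>k dvd d\<close> have "k dvd a * d - b * c" by (simp add: dvd_diff)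
  with \<open>a * d - b * c = 1\<close> have "k dvd 1" by simp
  then show "is_unit k" by simp
qed

lemma Gamma0_entries:
  assumes "(a, b, c, d) \<in> Gamma0 M" "even M"
  shows "odd a" "odd d" "even c" "coprime c d"
proof -
  show "even c" using assms dvd_trans[of 2 M c] by simp
  moreover have "a * d = 1 + b * c" using assms by simp
  ultimately have "odd (a * d)" by simp
  then show "odd a" "odd d" by simp_all
  show "coprime c d" using assms coprime_if_det_one[of a d b c] by simp
qed

lemma cbar_range: "cbar g h = 1 \<or> cbar g h = -1"
  by (auto simp: cbar_def hilb_def)

lemma eps_cong: "[d' = d] (mod 4) \<Longrightarrow> eps d' = eps d"
  unfolding eps_def by (metis cong_sym cong_trans)

lemma eps_one [simp]: "eps 1 = 1"
  by (simp add: eps_def)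

lemma eps_conv_mod: "eps d = (if d mod 4 = 1 then 1 else \<i>)"
  by (simp add: eps_def cong_def)

lemma inverse_eps_uminus: "odd d \<Longrightarrow> inverse (eps (- d)) = - of_int (chi4 d) * \<i> * inverse (eps d)"
  using odd_mod_4_cases[of d] by (auto simp: eps_conv_mod chi4_def zmod_zminus1_eq_if)

fun theta_mult :: "mat2 \<Rightarrow> complex" where
  "theta_mult (a, b, c, d) = of_int (kron c d) * inverse (eps d)"

definition theta_compatible :: "mat2 \<Rightarrow> mat2 \<Rightarrow> bool" where
  "theta_compatible g h \<longleftrightarrow> theta_mult (mmul g h) * of_int (cbar g h) = theta_mult g * theta_mult h"

lemma theta_compatible_translation:
  assumes "(a, b, c, d) \<in> Gamma0 4"
  shows "theta_compatible (a, b, c, d) (1, k, 0, 1)"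
proof -
  have "cbar (a, b, c, d) (1, k, 0, 1) = 1"
    using cbar_conv_xfun_sign[of "(a, b, c, d)" "(1, k, 0, 1)"] assms by simp
  moreover have "kron c (c * k + d) = kron c d"
    using assms Gamma0_entries(4)[OF assms even_numeral] by (intro kron_periodic_mod) (simp_all add: cong_def)
  moreover have "eps (c * k + d) = eps d"
    using assms by (intro eps_cong) (auto simp: cong_iff_dvd_diff)
  ultimately show ?thesis by (simp add: theta_compatible_def kron_def add.commute)
qed

lemma theta_compatible_lower:
  assumes "(a, b, c, d) \<in> Gamma0 4" "k = 1 \<or> k = -1"
  shows "theta_compatible (a, b, c, d) (1, 0, 4 * k, 1)"
proof -
  have "d \<noteq> 0" using Gamma0_entries[OF assms(1) even_numeral] by auto
  have gL: "mmul (a, b, c, d) (1, 0, 4 * k, 1) = (a + 4 * k * b, b, c + 4 * k * d, d)"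
    by (simp add: algebra_simps)
  have "jacobi (c + 4 * k * d) d = jacobi c d"
    by (rule jacobi_cong) (simp add: cong_iff_dvd_diff)
  moreover have "kron_sign (c + 4 * k * d) d * cbar (a, b, c, d) (1, 0, 4 * k, 1) = kron_sign c d"
    using cbar_conv_xfun_sign[of "(a, b, c, d)" "(1, 0, 4 * k, 1)"] assms \<open>d \<noteq> 0\<close>
    by (auto simp: kron_sign_def algebra_simps)
  ultimately have "kron (c + 4 * k * d) d * cbar (a, b, c, d) (1, 0, 4 * k, 1) = kron c d"
    using \<open>d \<noteq> 0\<close> by (simp add: kron_conv_jacobi mult.assoc)
  moreover have "theta_mult (1, 0, 4 * k, 1) = 1" by (simp add: kron_def)
  ultimately show ?thesis
    unfolding theta_compatible_def gL by (simp flip: of_int_mult)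
qed

lemma theta_compatible_minus_one:
  assumes "(a, b, c, d) \<in> Gamma0 4"
  shows "theta_compatible (a, b, c, d) (-1, 0, 0, -1)"
proof -
  have "odd d" "d \<noteq> 0" using Gamma0_entries[OF assms even_numeral] by auto
  define cb where "cb = cbar (a, b, c, d) (-1, 0, 0, -1)"
  have cb: "cb = (if xfun (a, b, c, d) < 0 then -1 else 1)"
    using cbar_conv_xfun_sign[of "(a, b, c, d)" "(-1, 0, 0, -1)"] assms by (auto simp: cb_def)
  have K: "kron (- c) (- d) = jacobi c d * (chi4 \<bar>d\<bar> * kron_sign (- c) (- d))"
    using jacobi_mult_left[OF \<open>odd d\<close>, of "-1" c] jacobi_minus_one[of "\<bar>d\<bar>"] \<open>odd d\<close> \<open>d \<noteq> 0\<close>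
    by (simp add: kron_conv_jacobi jacobi_uminus_right jacobi_abs_right)
  have S: "chi4 \<bar>d\<bar> * kron_sign (- c) (- d) * cb * (- chi4 d) = kron_sign c d"
    using chi4_uminus[OF \<open>odd d\<close>] \<open>d \<noteq> 0\<close> unfolding cb
    by (cases "d < 0") (auto simp: kron_sign_def)
  have "kron (- c) (- d) * cb * (- chi4 d)
      = jacobi c d * (chi4 \<bar>d\<bar> * kron_sign (- c) (- d) * cb * (- chi4 d))"
    unfolding K by (simp only: mult.assoc)
  also have "\<dots> = kron c d" unfolding S using \<open>d \<noteq> 0\<close> by (simp add: kron_conv_jacobi)
  finally have P: "kron (- c) (- d) * cb * (- chi4 d) = kron c d" .
  have "theta_mult (mmul (a, b, c, d) (-1, 0, 0, -1)) * of_int cb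
      = of_int (kron (- c) (- d)) * inverse (eps (- d)) * of_int cb"
    by simp
  also have "\<dots> = of_int (kron (- c) (- d) * cb * (- chi4 d)) * \<i> * inverse (eps d)"
    using inverse_eps_uminus[OF \<open>odd d\<close>] by (simp add: algebra_simps)
  also have "\<dots> = theta_mult (a, b, c, d) * theta_mult (-1, 0, 0, -1)"
    unfolding P by (simp add: kron_def eps_conv_mod)
  finally show ?thesis unfolding theta_compatible_def cb_def .
qed

lemma theta_compatible_mmul_right:
  assumes "g \<in> Gamma0 4" "x \<in> Gamma0 4" "y \<in> Gamma0 4"
    and "theta_compatible g x" "theta_compatible (mmul g x) y" "theta_compatible x y"
  shows "theta_compatible g (mmul x y)"
proof -
  have coc: "cbar g x * cbar (mmul g x) y = cbar g (mmul x y) * cbar x y"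
    using cbar_cocycle Gamma0_mdet assms(1-3) by blast
  have "of_int (cbar x y) \<noteq> (0::complex)" using cbar_range[of x y] by auto
  have "theta_mult (mmul g (mmul x y)) * of_int (cbar g (mmul x y)) * of_int (cbar x y)
      = theta_mult (mmul (mmul g x) y) * of_int (cbar g x * cbar (mmul g x) y)"
    unfolding coc mmul_assoc by (simp add: algebra_simps)
  also have "\<dots> = theta_mult g * (theta_mult x * theta_mult y)"
    using assms(4,5) by (simp add: theta_compatible_def algebra_simps)
  also have "\<dots> = theta_mult g * theta_mult (mmul x y) * of_int (cbar x y)"
    using assms(6) by (simp add: theta_compatible_def algebra_simps)
  finally show ?thesis using \<open>of_int (cbar x y) \<noteq> 0\<close> by (simp add: theta_compatible_def)
qed

text \<open>Right multiplication by \<open>T\<^sup>\<plusminus>\<^sup>1 = (1,\<plusminus>1;0,1)\<close> or \<open>L\<^sup>\<plusminus>\<^sup>1 = (1,0;\<plusminus>4,1)\<close> decreases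
  \<open>|c| + |d|\<close> until \<open>c = 0\<close>.\<close>
lemma Gamma0_4_induct [consumes 1, case_names T T_inv L L_inv minus_one mult]:
  assumes "g \<in> Gamma0 4"
    and T: "P (1, 1, 0, 1)" and T_inv: "P (1, -1, 0, 1)"
    and L: "P (1, 0, 4, 1)" and L_inv: "P (1, 0, -4, 1)"
    and minus_one: "P (-1, 0, 0, -1)"
    and mult: "\<And>x y. x \<in> Gamma0 4 \<Longrightarrow> y \<in> Gamma0 4 \<Longrightarrow> P x \<Longrightarrow> P y \<Longrightarrow> P (mmul x y)"
  shows "P g"
proof -
  have translation: "P (1, b, 0, 1)" for b
  proof (induction b rule: int_induct[where k = 1])
    case (step1 i)
    then show ?case using mult[of "(1, i, 0, 1)" "(1, 1, 0, 1)"] T by (simp add: add.commute)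
  next
    case (step2 i)
    then show ?case using mult[of "(1, i, 0, 1)" "(1, -1, 0, 1)"] T_inv by simp
  qed (rule T)
  have upper: "P (a, b, 0, d)" if "a * d = 1" for a b d
  proof -
    have "a = 1 \<and> d = 1 \<or> a = -1 \<and> d = -1" using that zmult_eq_1_iff by blast
    then show ?thesis
      using translation[of b] translation[of "-b"] mult[of "(1, -b, 0, 1)" "(-1, 0, 0, -1)"] minus_one
      by auto
  qed
  obtain a b c d where "g = (a, b, c, d)" by (cases g)
  with assms(1) show ?thesis
  proof (induction "nat (\<bar>c\<bar> + \<bar>d\<bar>)" arbitrary: a b c d g rule: less_induct)
    case less
    show ?case
    proof (cases "c = 0")
      case True
      then show ?thesis using upper less.prems by simp
    next
      case False
      have G: "(a, b, c, d) \<in> Gamma0 4" using less.prems by simp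
      note entries = Gamma0_entries[OF G even_numeral]
      have "4 \<le> \<bar>c\<bar>" using G False dvd_imp_le_int[of c 4] by simp
      moreover have "\<bar>c\<bar> \<noteq> \<bar>d\<bar>"
      proof
        assume "\<bar>c\<bar> = \<bar>d\<bar>"
        then have "c dvd d" by (metis abs_dvd_iff dvd_abs_iff dvd_refl)
        then have "c dvd 1" using entries(4) coprime_common_divisor[of c d c] by simp
        then show False using \<open>4 \<le> \<bar>c\<bar>\<close> by simp
      qed
      moreover have "\<bar>c\<bar> \<noteq> 2 * \<bar>d\<bar>"
      proof -
        have "4 dvd \<bar>c\<bar>" "odd \<bar>d\<bar>" using G entries(2) by simp_all
        then show ?thesis by presburger
      qed
      moreover have "d \<noteq> 0" using entries(2) by auto
      ultimately have "\<bar>c + d\<bar> < \<bar>d\<bar> \<or> \<bar>d - c\<bar> < \<bar>d\<bar> \<or> \<bar>c + 4 * d\<bar> < \<bar>c\<bar> \<or> \<bar>c - 4 * d\<bar> < \<bar>c\<bar>"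
        by arith
      then consider "\<bar>c + d\<bar> < \<bar>d\<bar>" | "\<bar>d - c\<bar> < \<bar>d\<bar>" | "\<bar>c + 4 * d\<bar> < \<bar>c\<bar>" | "\<bar>c - 4 * d\<bar> < \<bar>c\<bar>"
        by blast
      then show ?thesis
      proof cases
        case 1
        have "P (a, a + b, c, c + d)" using less.hyps[of c "c + d"] 1 G by (simp add: algebra_simps)
        then show ?thesis using mult[of "(a, a + b, c, c + d)" "(1, -1, 0, 1)"] T_inv G less.prems
          by (simp add: algebra_simps)
      next
        case 2
        have "P (a, b - a, c, d - c)" using less.hyps[of c "d - c"] 2 G by (simp add: algebra_simps)
        then show ?thesis using mult[of "(a, b - a, c, d - c)" "(1, 1, 0, 1)"] T G less.prems
          by (simp add: algebra_simps)
      next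
        case 3
        have "P (a + 4 * b, b, c + 4 * d, d)" using less.hyps[of "c + 4 * d" d] 3 G
          by (simp add: algebra_simps)
        then show ?thesis using mult[of "(a + 4 * b, b, c + 4 * d, d)" "(1, 0, -4, 1)"] L_inv G less.prems
          by (simp add: algebra_simps)
      next
        case 4
        have "P (a - 4 * b, b, c - 4 * d, d)" using less.hyps[of "c - 4 * d" d] 4 G
          by (simp add: algebra_simps)
        then show ?thesis using mult[of "(a - 4 * b, b, c - 4 * d, d)" "(1, 0, 4, 1)"] L G less.prems
          by (simp add: algebra_simps)
      qed
    qed
  qed
qed

theorem theta_mult_mmul:
  assumes "g \<in> Gamma0 4" "h \<in> Gamma0 4"
  shows "theta_mult (mmul g h) * of_int (cbar g h) = theta_mult g * theta_mult h"
proof -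
  have "\<forall>g \<in> Gamma0 4. theta_compatible g h"
    using assms(2)
  proof (induction h rule: Gamma0_4_induct)
    case T
    then show ?case using theta_compatible_translation by auto
  next
    case T_inv
    then show ?case using theta_compatible_translation by auto
  next
    case L
    then show ?case using theta_compatible_lower[where k = 1] by auto
  next
    case L_inv
    then show ?case using theta_compatible_lower[where k = "-1"] by auto
  next
    case minus_one
    then show ?case using theta_compatible_minus_one by auto
  next
    case (mult x y)
    then show ?case using theta_compatible_mmul_right Gamma0_mmul by blast
  qed
  then show ?thesis using assms(1) by (simp add: theta_compatible_def)
qed

section \<open>The metaplectic group and the character \<open>\<lambda>\<close>\<close>

lemma carrier_mp_group_iff: "x \<in> carrier (mp_group S) \<longleftrightarrow> fst x \<in> S \<and> (snd x = 1 \<or> snd x = -1)"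
  by (cases x) (auto simp: mp_group_def)

lemma mult_mp_group [simp]: "mult (mp_group S) = mp_mult"
  by (simp add: mp_group_def)

lemma one_mp_group [simp]: "one (mp_group S) = ((1, 0, 0, 1), 1)"
  by (simp add: mp_group_def)

lemma mp_mult_conv: "mp_mult x y = (mmul (fst x) (fst y), cbar (fst x) (fst y) * snd x * snd y)"
  by (cases x; cases y) simp

lemma cbar_one_left [simp]: "cbar (1, 0, 0, 1) g = 1"
  by (cases g) (simp add: cbar_def hilb_def)

lemma cbar_one_right [simp]: "cbar g (1, 0, 0, 1) = 1"
  by (cases g) (simp add: cbar_def hilb_def)

lemma monoid_mp_group_Gamma0: "monoid (mp_group (Gamma0 M))"
proof
  fix x y z
  assume x: "x \<in> carrier (mp_group (Gamma0 M))" and y: "y \<in> carrier (mp_group (Gamma0 M))"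
    and z: "z \<in> carrier (mp_group (Gamma0 M))"
  then show "x \<otimes>\<^bsub>mp_group (Gamma0 M)\<^esub> y \<in> carrier (mp_group (Gamma0 M))"
    using Gamma0_mmul cbar_range[of "fst x" "fst y"] by (auto simp: carrier_mp_group_iff mp_mult_conv)
  have "cbar (fst x) (fst y) * cbar (mmul (fst x) (fst y)) (fst z)
      = cbar (fst x) (mmul (fst y) (fst z)) * cbar (fst y) (fst z)"
    using x y z by (intro cbar_cocycle) (auto simp: carrier_mp_group_iff intro: Gamma0_mdet)
  then show "x \<otimes>\<^bsub>mp_group (Gamma0 M)\<^esub> y \<otimes>\<^bsub>mp_group (Gamma0 M)\<^esub> z
      = x \<otimes>\<^bsub>mp_group (Gamma0 M)\<^esub> (y \<otimes>\<^bsub>mp_group (Gamma0 M)\<^esub> z)"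
    by (simp add: mp_mult_conv mmul_assoc algebra_simps)
next
  fix x
  show "\<one>\<^bsub>mp_group (Gamma0 M)\<^esub> \<otimes>\<^bsub>mp_group (Gamma0 M)\<^esub> x = x"
    "x \<otimes>\<^bsub>mp_group (Gamma0 M)\<^esub> \<one>\<^bsub>mp_group (Gamma0 M)\<^esub> = x"
    by (cases x; auto)+
qed (simp add: carrier_mp_group_iff)

lemma Gamma_theta_Gamma0_iff:
  assumes "even M"
  shows "(a, b, c, d) \<in> Gamma_theta \<inter> Gamma0 M \<longleftrightarrow> (a, b, c, d) \<in> Gamma0 M \<and> even b"
  using Gamma0_entries[of a b c d M] assms by (auto simp: Gamma_theta_def)

lemma mem_mp_theta_iff:
  assumes "even M"
  shows "((a, b, c, d), e) \<in> carrier (mp_group (Gamma_theta \<inter> Gamma0 M))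
    \<longleftrightarrow> ((a, b, c, d), e) \<in> carrier (mp_group (Gamma0 M)) \<and> even b"
  using Gamma_theta_Gamma0_iff[OF assms] by (auto simp: carrier_mp_group_iff)

lemma mp_theta_subset: "carrier (mp_group (Gamma_theta \<inter> Gamma0 M)) \<subseteq> carrier (mp_group (Gamma0 M))"
  by (auto simp: carrier_mp_group_iff)

text \<open>Membership is the parity of the entry \<open>b\<close>, and the \<open>b\<close>-entry of a product is
  \<open>a\<^sub>1 b\<^sub>2 + b\<^sub>1 d\<^sub>2\<close> with \<open>a\<^sub>1, d\<^sub>2\<close> odd.\<close>
lemma mp_mult_mem_theta_iff:
  assumes "even M" "x \<in> carrier (mp_group (Gamma0 M))" "y \<in> carrier (mp_group (Gamma0 M))"
  shows "mp_mult x y \<in> carrier (mp_group (Gamma_theta \<inter> Gamma0 M))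
    \<longleftrightarrow> (x \<in> carrier (mp_group (Gamma_theta \<inter> Gamma0 M)) \<longleftrightarrow> y \<in> carrier (mp_group (Gamma_theta \<inter> Gamma0 M)))"
proof -
  obtain a1 b1 c1 d1 e1 a2 b2 c2 d2 e2 where x: "x = ((a1, b1, c1, d1), e1)" and y: "y = ((a2, b2, c2, d2), e2)"
    by (cases x; cases y) auto
  have "odd a1" "odd d2"
    using assms Gamma0_entries[of a1 b1 c1 d1 M] Gamma0_entries[of a2 b2 c2 d2 M]
    by (auto simp: x y carrier_mp_group_iff)
  moreover have "mp_mult x y \<in> carrier (mp_group (Gamma0 M))"
    using assms(2,3) monoid.m_closed[OF monoid_mp_group_Gamma0] by fastforce
  ultimately show ?thesis
    using assms by (auto simp: x y mem_mp_theta_iff)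
qed

lemma dirichlet_char_cong:
  assumes "dirichlet_char N \<chi>" "[m = n] (mod N)"
  shows "\<chi> m = \<chi> n"
proof -
  have "\<chi> (n + k * N) = \<chi> n" for k
  proof (induction k rule: int_induct[where k = 0])
    case (step1 i)
    then show ?case using assms(1) unfolding dirichlet_char_def by (metis add.assoc distrib_right mult_1)
  next
    case (step2 i)
    then show ?case using assms(1) unfolding dirichlet_char_def
      by (metis add.assoc diff_add_cancel left_diff_distrib' mult_1)
  qed simp
  moreover obtain k where "m = n + k * N"
    using assms(2) by (metis cong_iff_lin cong_sym mult.commute)
  ultimately show ?thesis by simp
qed

lemma dirichlet_char_mult: "dirichlet_char N \<chi> \<Longrightarrow> \<chi> (m * n) = \<chi> m * \<chi> n"
  by (simp add: dirichlet_char_def)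

lemma dirichlet_char_one: "dirichlet_char N \<chi> \<Longrightarrow> \<chi> 1 = 1"
  by (simp add: dirichlet_char_def)

lemma lam_bar_theta:
  assumes "4 dvd M" "((a, b, c, d), e) \<in> carrier (mp_group (Gamma_theta \<inter> Gamma0 M))"
  shows "lam_bar \<chi> ((a, b, c, d), e) = of_int (chi8 d * e) * theta_mult (a, b, c, d) * \<chi> d"
proof -
  have "even M" using assms(1) dvd_trans[of 2 4 M] by simp
  then have "(a, b, c, d) \<in> Gamma0 M" "even b"
    using assms(2) mem_mp_theta_iff by (auto simp: carrier_mp_group_iff)
  moreover note Gamma0_entries[OF this(1) \<open>even M\<close>]
  ultimately have "(a, b, c, d) \<in> Gamma2"
    by (auto simp: Gamma2_def cong_iff_dvd_diff cong_0_iff elim: oddE)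
  then show ?thesis
    using kron_double_left[OF \<open>odd d\<close>, of c] by (simp add: lam_bar_def lam_def algebra_simps)
qed

text \<open>On \<open>\<Gamma>\<^sub>\<theta> \<inter> \<Gamma>\<^sub>0(M)\<close> the factor \<open>\<lambda>\<close> is the theta multiplier twisted by \<open>(2/d)\<close>;
  its cocycle cancels the one of the metaplectic product.\<close>
theorem lam_bar_mult:
  assumes "4 dvd M" "N dvd M" "dirichlet_char N \<chi>"
    and "x \<in> carrier (mp_group (Gamma_theta \<inter> Gamma0 M))" "y \<in> carrier (mp_group (Gamma_theta \<inter> Gamma0 M))"
  shows "lam_bar \<chi> (mp_mult x y) = lam_bar \<chi> x * lam_bar \<chi> y"
proof -
  obtain a1 b1 c1 d1 e1 a2 b2 c2 d2 e2 where x: "x = ((a1, b1, c1, d1), e1)" and y: "y = ((a2, b2, c2, d2), e2)"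
    by (cases x; cases y) auto
  have "even M" using assms(1) dvd_trans[of 2 4 M] by simp
  then have g1: "(a1, b1, c1, d1) \<in> Gamma0 M" and g2: "(a2, b2, c2, d2) \<in> Gamma0 M" and "even b2"
    using assms(4,5) mem_mp_theta_iff by (auto simp: x y carrier_mp_group_iff)
  have "odd d1" "odd d2" using Gamma0_entries g1 g2 \<open>even M\<close> by blast+
  have "M dvd c1" using g1 by simp
  then have "4 dvd c1" "N dvd c1" using assms(1,2) dvd_trans by blast+
  have "mp_mult x y \<in> carrier (mp_group (Gamma_theta \<inter> Gamma0 M))"
    using mp_mult_mem_theta_iff[OF \<open>even M\<close>] assms(4,5) mp_theta_subset by blast
  then have "lam_bar \<chi> (mp_mult x y) = of_int (chi8 (c1 * b2 + d1 * d2) * (cbar (a1, b1, c1, d1) (a2, b2, c2, d2) * e1 * e2))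
      * theta_mult (mmul (a1, b1, c1, d1) (a2, b2, c2, d2)) * \<chi> (c1 * b2 + d1 * d2)"
    using lam_bar_theta[OF assms(1)] by (simp add: x y)
  moreover have "chi8 (c1 * b2 + d1 * d2) = chi8 d1 * chi8 d2"
  proof -
    have "8 dvd c1 * b2" using \<open>4 dvd c1\<close> \<open>even b2\<close> by (metis mult_dvd_mono numeral_Bit0_eq_double mult.commute)
    then show ?thesis using chi8_cong[of "c1 * b2 + d1 * d2" "d1 * d2"] chi8_mult \<open>odd d1\<close> \<open>odd d2\<close>
      by (simp add: cong_iff_dvd_diff)
  qed
  moreover have "\<chi> (c1 * b2 + d1 * d2) = \<chi> d1 * \<chi> d2"
    using dirichlet_char_cong[OF assms(3), of "c1 * b2 + d1 * d2" "d1 * d2"] \<open>N dvd c1\<close>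
      dirichlet_char_mult[OF assms(3)] by (simp add: cong_iff_dvd_diff)
  moreover have "theta_mult (mmul (a1, b1, c1, d1) (a2, b2, c2, d2)) * of_int (cbar (a1, b1, c1, d1) (a2, b2, c2, d2))
      = theta_mult (a1, b1, c1, d1) * theta_mult (a2, b2, c2, d2)"
    using theta_mult_mmul Gamma0_mono[OF assms(1)] g1 g2 by blast
  ultimately show ?thesis
    using lam_bar_theta[OF assms(1) assms(4)[unfolded x]] lam_bar_theta[OF assms(1) assms(5)[unfolded y]]
    by (simp add: x y algebra_simps)
qed

section \<open>Representations induced from a subgroup of index two\<close>

lemma fsc_apply [simp]: "fsc c f x = c * f x"
  by (simp add: fsc_def)

lemma vector_space_fsc: "vector_space (fsc :: complex \<Rightarrow> ('a \<Rightarrow> complex) \<Rightarrow> 'a \<Rightarrow> complex)"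
  by unfold_locales (simp_all add: fun_eq_iff algebra_simps)

lemma module_fsc: "Modules.module (fsc :: complex \<Rightarrow> ('a \<Rightarrow> complex) \<Rightarrow> 'a \<Rightarrow> complex)"
  using vector_space_fsc by (simp add: vector_space_def Modules.module_def)

lemma subspace_fsc_iff:
  "Modules.module.subspace fsc S \<longleftrightarrow> 0 \<in> S \<and> (\<forall>x\<in>S. \<forall>y\<in>S. x + y \<in> S) \<and> (\<forall>c. \<forall>x\<in>S. fsc c x \<in> S)"
  by (rule Modules.module.subspace_def[OF module_fsc])

lemma fsc_fsc [simp]: "fsc a (fsc b f) = fsc (a * b) f"
  by (simp add: fun_eq_iff)

lemma fsc_one [simp]: "fsc 1 f = f"
  by (simp add: fun_eq_iff)

lemma fsc_zero [simp]: "fsc 0 f = 0" "fsc c 0 = 0"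
  by (simp_all add: fun_eq_iff)

lemma ind_act_add: "ind_act G g (f + f') = ind_act G g f + ind_act G g f'"
  by (auto simp: ind_act_def fun_eq_iff)

lemma ind_act_fsc: "ind_act G g (fsc c f) = fsc c (ind_act G g f)"
  by (auto simp: ind_act_def fun_eq_iff)

lemma (in monoid) ind_act_mult:
  assumes "g \<in> carrier G" "h \<in> carrier G"
  shows "ind_act G (g \<otimes> h) f = ind_act G g (ind_act G h f)"
  using assms by (auto simp: ind_act_def fun_eq_iff m_assoc)

lemma (in monoid) ind_act_closed:
  assumes "H \<subseteq> carrier G" "g \<in> carrier G" "f \<in> ind_space G H \<psi>"
  shows "ind_act G g f \<in> ind_space G H \<psi>"
proof -
  have "f (h \<otimes> x \<otimes> g) = \<psi> h * f (x \<otimes> g)" if "h \<in> H" "x \<in> carrier G" for h x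
    using assms that by (simp add: ind_space_def m_assoc subsetD)
  then show ?thesis using assms by (auto simp: ind_space_def ind_act_def subsetD)
qed

lemma (in monoid) complex_rep_ind_space:
  assumes "H \<subseteq> carrier G"
  shows "complex_rep G (ind_act G) (ind_space G H \<psi>)"
  unfolding complex_rep_def
proof (intro conjI ballI allI)
  show "Modules.module.subspace fsc (ind_space G H \<psi>)"
    by (auto simp: subspace_fsc_iff ind_space_def algebra_simps)
  show "ind_act G \<one> v = v" if "v \<in> ind_space G H \<psi>" for v
    using that by (auto simp: ind_act_def ind_space_def fun_eq_iff)
qed (simp_all add: ind_act_closed assms ind_act_add ind_act_fsc ind_act_mult)

definition complex_line :: "('b \<Rightarrow> complex) \<Rightarrow> ('b \<Rightarrow> complex) set" where
  "complex_line p = range (\<lambda>u. fsc u p)"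

lemma mem_complex_line_iff: "f \<in> complex_line p \<longleftrightarrow> (\<exists>u. f = fsc u p)"
  by (auto simp: complex_line_def)

lemma fsc_mem_complex_line [simp]: "fsc u p \<in> complex_line p"
  by (simp add: complex_line_def)

lemma self_mem_complex_line [simp]: "p \<in> complex_line p"
  using fsc_mem_complex_line[of 1 p] by simp

lemma zero_mem_complex_line [simp]: "0 \<in> complex_line p"
  using fsc_mem_complex_line[of 0 p] by simp

lemma fsc_add_left: "fsc a f + fsc b f = fsc (a + b) f"
  by (simp add: fun_eq_iff algebra_simps)

lemma subspace_complex_line: "Modules.module.subspace fsc (complex_line p)"
  unfolding subspace_fsc_iff mem_complex_line_iff
proof (intro conjI ballI allI)
  show "\<exists>u. 0 = fsc u p" by (rule exI[of _ 0]) simp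
qed (auto simp: fsc_add_left mem_complex_line_iff)

lemma irreducible_rep_complex_line:
  assumes "p \<noteq> 0"
  shows "irreducible_rep G \<rho> (complex_line p)"
  unfolding irreducible_rep_def
proof (intro conjI allI impI)
  show "complex_line p \<noteq> {0}" using assms self_mem_complex_line[of p] by blast
next
  fix W assume "invariant_subspace G \<rho> (complex_line p) W"
  then have W: "W \<subseteq> complex_line p" "0 \<in> W" "\<And>c x. x \<in> W \<Longrightarrow> fsc c x \<in> W"
    by (auto simp: invariant_subspace_def subspace_fsc_iff)
  show "W = {0} \<or> W = complex_line p"
  proof (cases "W = {0}")
    case False
    then obtain w where "w \<in> W" "w \<noteq> 0" using W(2) by blast
    moreover have "w \<in> complex_line p" using W(1) \<open>w \<in> W\<close> by blast
    then obtain u where "w = fsc u p" by (auto simp: mem_complex_line_iff)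
    ultimately have "u \<noteq> 0" by auto
    have "fsc u' p \<in> W" for u'
      using W(3)[OF \<open>w \<in> W\<close>, of "u' / u"] \<open>w = fsc u p\<close> \<open>u \<noteq> 0\<close> by simp
    then have "complex_line p \<subseteq> W" by (auto simp: mem_complex_line_iff)
    then show ?thesis using W(1) by blast
  qed simp
qed

lemma invariant_subspace_complex_line:
  assumes "complex_rep G \<rho> V" "p \<in> V" "\<And>g. g \<in> carrier G \<Longrightarrow> \<exists>c. \<rho> g p = fsc c p"
  shows "invariant_subspace G \<rho> V (complex_line p)"
  unfolding invariant_subspace_def
proof (intro conjI ballI subspace_complex_line)
  show "complex_line p \<subseteq> V"
    using assms(1,2) by (auto simp: complex_rep_def subspace_fsc_iff mem_complex_line_iff)
  fix g w assume "g \<in> carrier G" "w \<in> complex_line p"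
  obtain u where "w = fsc u p" using \<open>w \<in> complex_line p\<close> by (auto simp: mem_complex_line_iff)
  obtain c where "\<rho> g p = fsc c p" using assms(3)[OF \<open>g \<in> carrier G\<close>] by blast
  then have "\<rho> g w = fsc (u * c) p"
    using assms(1,2) \<open>g \<in> carrier G\<close> \<open>w = fsc u p\<close> by (simp add: complex_rep_def mult.commute)
  then show "\<rho> g w \<in> complex_line p" by (auto simp: mem_complex_line_iff)
qed

lemma not_rep_iso_complex_lines:
  assumes "complex_rep G \<rho> V" "q \<in> V" "g \<in> carrier G"
    and "\<rho> g p = fsc a p" "\<rho> g q = fsc b q" "a \<noteq> b" "p \<noteq> 0"
  shows "\<not> rep_iso G \<rho> (complex_line p) (complex_line q)"
proof
  assume "rep_iso G \<rho> (complex_line p) (complex_line q)"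
  then obtain T where T: "bij_betw T (complex_line p) (complex_line q)"
    "\<And>c v. v \<in> complex_line p \<Longrightarrow> T (fsc c v) = fsc c (T v)"
    "\<And>v. v \<in> complex_line p \<Longrightarrow> T (\<rho> g v) = \<rho> g (T v)"
    using assms(3) unfolding rep_iso_def by blast
  have p: "p \<in> complex_line p" by simp
  then have "T p \<in> complex_line q" using T(1) bij_betwE by blast
  then obtain v where v: "T p = fsc v q" by (auto simp: mem_complex_line_iff)
  have "fsc (a * v) q = T (\<rho> g p)" using T(2)[OF p(1)] assms(4) v by simp
  also have "\<dots> = \<rho> g (fsc v q)" using T(3)[OF p(1)] v by simp
  also have "\<dots> = fsc (b * v) q" using assms(1-3,5) by (simp add: complex_rep_def mult.commute)
  finally have "fsc ((a - b) * v) q = 0" by (simp add: fun_eq_iff algebra_simps)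
  then have "fsc (1 / (a - b)) (fsc ((a - b) * v) q) = 0" by simp
  then have "fsc v q = 0" using assms(6) by simp
  then have "T p = T 0" using T(2)[OF p, of 0] v by simp
  then have "p = 0" using T(1) p zero_mem_complex_line unfolding bij_betw_def by (meson inj_onD)
  then show False using assms(7) by simp
qed

locale index_two_induction = monoid G for G :: "('g, 'm) monoid_scheme" (structure) +
  fixes H :: "'g set" and t t' :: 'g and \<psi> :: "'g \<Rightarrow> complex"
  assumes subset: "H \<subseteq> carrier G"
    and t_closed: "t \<in> carrier G" and t'_closed: "t' \<in> carrier G" and t_notin: "t \<notin> H"
    and t_t': "t \<otimes> t' = \<one>" and t'_t: "t' \<otimes> t = \<one>"
    and mult_mem_iff: "\<And>x y. x \<in> carrier G \<Longrightarrow> y \<in> carrier G \<Longrightarrow> x \<otimes> y \<in> H \<longleftrightarrow> (x \<in> H \<longleftrightarrow> y \<in> H)"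
    and psi_mult: "\<And>x y. x \<in> H \<Longrightarrow> y \<in> H \<Longrightarrow> \<psi> (x \<otimes> y) = \<psi> x * \<psi> y"
    and psi_one: "\<psi> \<one> = 1"
    and psi_t_square: "\<psi> (t \<otimes> t) = 1"
begin

definition basis_H :: "'g \<Rightarrow> complex" where
  "basis_H x = (if x \<in> H then \<psi> x else 0)"

definition basis_Ht :: "'g \<Rightarrow> complex" where
  "basis_Ht x = (if x \<in> carrier G \<and> x \<notin> H then \<psi> (x \<otimes> t') else 0)"

lemma one_mem: "\<one> \<in> H"
  using mult_mem_iff[of \<one> \<one>] by simp

lemma t'_notin: "t' \<notin> H"
  using mult_mem_iff[OF t_closed t'_closed] t_t' one_mem t_notin by simp

lemma coset_decomp:
  assumes "x \<in> carrier G" "x \<notin> H"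
  shows "x \<otimes> t' \<in> H" "x \<otimes> t' \<otimes> t = x"
  using assms mult_mem_iff[OF assms(1) t'_closed] t'_notin by (simp_all add: m_assoc t'_closed t_closed t'_t)

lemma basis_H_mem: "basis_H \<in> ind_space G H \<psi>"
  using subset mult_mem_iff psi_mult by (auto simp: ind_space_def basis_H_def)

lemma basis_Ht_mem: "basis_Ht \<in> ind_space G H \<psi>"
proof -
  have "\<psi> (h \<otimes> x \<otimes> t') = \<psi> h * \<psi> (x \<otimes> t')" if "h \<in> H" "x \<in> carrier G" "x \<notin> H" for h x
    using that subset coset_decomp psi_mult by (auto simp: m_assoc t'_closed)
  then show ?thesis
    using subset mult_mem_iff by (auto simp: ind_space_def basis_Ht_def)
qed

lemma basis_values: "basis_H \<one> = 1" "basis_H t = 0" "basis_Ht \<one> = 0" "basis_Ht t = 1"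
  using one_mem t_notin t_closed psi_one by (simp_all add: basis_H_def basis_Ht_def t_t')

lemma ind_space_decomp:
  assumes "f \<in> ind_space G H \<psi>"
  shows "f = fsc (f \<one>) basis_H + fsc (f t) basis_Ht"
proof
  fix x
  have f: "\<And>x. x \<notin> carrier G \<Longrightarrow> f x = 0" "\<And>h x. h \<in> H \<Longrightarrow> x \<in> carrier G \<Longrightarrow> f (h \<otimes> x) = \<psi> h * f x"
    using assms by (auto simp: ind_space_def)
  consider "x \<notin> carrier G" | "x \<in> H" | "x \<in> carrier G" "x \<notin> H" by blast
  then show "f x = (fsc (f \<one>) basis_H + fsc (f t) basis_Ht) x"
  proof cases
    case 1
    then show ?thesis using f(1) subset by (auto simp: basis_H_def basis_Ht_def)
  next
    case 2
    then show ?thesis using f(2)[of x \<one>] subset by (auto simp: basis_H_def basis_Ht_def)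
  next
    case 3
    then show ?thesis using f(2)[OF coset_decomp(1), of x t] coset_decomp(2) t_closed
      by (auto simp: basis_H_def basis_Ht_def)
  qed
qed

lemma rep_dim_ind_space: "rep_dim (ind_space G H \<psi>) = 2"
proof -
  have "ind_space G H \<psi> \<subseteq> Modules.module.span fsc {basis_H, basis_Ht}"
    using ind_space_decomp Modules.module.span_add[OF module_fsc] Modules.module.span_scale[OF module_fsc]
      Modules.module.span_base[OF module_fsc] by (metis insertCI subsetI)
  moreover have "\<not> Modules.module.dependent fsc {basis_H, basis_Ht}"
  proof -
    have "basis_H \<notin> Modules.module.span fsc {basis_Ht}"
      using basis_values Modules.module.span_singleton[OF module_fsc, of basis_Ht]
      by (auto simp: fun_eq_iff)
    moreover have "basis_Ht \<noteq> 0" using basis_values(4) by (metis zero_fun_def zero_neq_one)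
    ultimately show ?thesis
      using vector_space.independent_insertI[OF vector_space_fsc] vector_space.dependent_single[OF vector_space_fsc]
      by blast
  qed
  moreover have "basis_H \<noteq> basis_Ht" using basis_values(1,3) by (metis zero_neq_one)
  then have "card {basis_H, basis_Ht} = 2" by simp
  ultimately show ?thesis
    unfolding rep_dim_def using vector_space.dim_unique[OF vector_space_fsc] basis_H_mem basis_Ht_mem
    by (metis empty_subsetI insert_subset)
qed

lemma ind_act_basis_H:
  assumes "h \<in> H"
  shows "ind_act G h basis_H = fsc (\<psi> h) basis_H"
proof
  fix x
  show "ind_act G h basis_H x = fsc (\<psi> h) basis_H x"
    using assms subset mult_mem_iff[of x h] psi_mult[of x h]
    by (auto simp: ind_act_def basis_H_def mult.commute)
qed

lemma ind_act_basis_Ht: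
  assumes "h \<in> H"
  shows "ind_act G h basis_Ht = fsc (\<psi> (t \<otimes> h \<otimes> t')) basis_Ht"
proof
  fix x
  have hG: "h \<in> carrier G" using assms subset by blast
  have tht: "t \<otimes> h \<otimes> t' \<in> H"
    using mult_mem_iff[of t h] mult_mem_iff[of "t \<otimes> h" t'] assms hG t_closed t'_closed t_notin t'_notin
    by simp
  have "\<psi> (x \<otimes> h \<otimes> t') = \<psi> (x \<otimes> t') * \<psi> (t \<otimes> h \<otimes> t')" if "x \<in> carrier G" "x \<notin> H"
  proof -
    have "x \<otimes> h \<otimes> t' = x \<otimes> t' \<otimes> t \<otimes> h \<otimes> t'" using coset_decomp(2)[OF that] by simp
    also have "\<dots> = (x \<otimes> t') \<otimes> (t \<otimes> h \<otimes> t')" using that hG t_closed t'_closed by (simp add: m_assoc)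
    finally show ?thesis using psi_mult[OF coset_decomp(1)[OF that] tht] by simp
  qed
  then show "ind_act G h basis_Ht x = fsc (\<psi> (t \<otimes> h \<otimes> t')) basis_Ht x"
    using assms hG mult_mem_iff[of x h] by (auto simp: ind_act_def basis_Ht_def mult.commute)
qed

lemma ind_act_t_basis_H: "ind_act G t basis_H = basis_Ht"
proof
  fix x
  have "\<psi> (x \<otimes> t) = \<psi> (x \<otimes> t')" if "x \<in> carrier G" "x \<notin> H"
  proof -
    have tt: "t \<otimes> t \<in> H" using mult_mem_iff[OF t_closed t_closed] t_notin by simp
    have "x \<otimes> t = (x \<otimes> t') \<otimes> (t \<otimes> t)"
      using coset_decomp(2)[OF that] that t_closed t'_closed by (metis m_assoc m_closed)
    then show ?thesis using psi_mult[OF coset_decomp(1)[OF that] tt] psi_t_square by simp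
  qed
  then show "ind_act G t basis_H x = basis_Ht x"
    using mult_mem_iff[of x t] t_closed t_notin subset by (auto simp: ind_act_def basis_H_def basis_Ht_def)
qed

lemma ind_act_t_basis_Ht: "ind_act G t basis_Ht = basis_H"
proof
  fix x
  show "ind_act G t basis_Ht x = basis_H x"
    using mult_mem_iff[of x t] t_closed t'_closed t_notin subset t_t'
    by (auto simp: ind_act_def basis_H_def basis_Ht_def m_assoc subsetD)
qed

text \<open>\<open>h\<close> separates the two basis lines and \<open>t\<close> exchanges them.\<close>
lemma irreducible_if_conjugate_differs:
  assumes h: "h \<in> H" and differs: "\<psi> (t \<otimes> h \<otimes> t') \<noteq> \<psi> h"
  shows "irreducible_rep G (ind_act G) (ind_space G H \<psi>)"
  unfolding irreducible_rep_def
proof (intro conjI allI impI)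
  show "ind_space G H \<psi> \<noteq> {0}"
    using basis_H_mem basis_values(1) by (metis singletonD zero_fun_def zero_neq_one)
next
  fix W assume "invariant_subspace G (ind_act G) (ind_space G H \<psi>) W"
  then have W: "W \<subseteq> ind_space G H \<psi>" "0 \<in> W" "\<And>x y. x \<in> W \<Longrightarrow> y \<in> W \<Longrightarrow> x + y \<in> W"
    "\<And>c x. x \<in> W \<Longrightarrow> fsc c x \<in> W" "\<And>g x. g \<in> carrier G \<Longrightarrow> x \<in> W \<Longrightarrow> ind_act G g x \<in> W"
    by (auto simp: invariant_subspace_def subspace_fsc_iff)
  show "W = {0} \<or> W = ind_space G H \<psi>"
  proof (cases "W = {0}")
    case False
    then obtain w where "w \<in> W" "w \<noteq> 0" using W(2) by blast
    define u v a b where "u = w \<one>" and "v = w t" and "a = \<psi> h" and "b = \<psi> (t \<otimes> h \<otimes> t')"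
    have w: "w = fsc u basis_H + fsc v basis_Ht"
      using ind_space_decomp W(1) \<open>w \<in> W\<close> unfolding u_def v_def by blast
    have hw: "ind_act G h w = fsc (u * a) basis_H + fsc (v * b) basis_Ht"
      unfolding w a_def b_def by (simp add: ind_act_add ind_act_fsc ind_act_basis_H ind_act_basis_Ht h mult.commute)
    have hG: "h \<in> carrier G" using h subset by blast
    have "ind_act G h w + fsc (- b) w \<in> W" "ind_act G h w + fsc (- a) w \<in> W"
      using W(3-5) hG \<open>w \<in> W\<close> by blast+
    moreover have "ind_act G h w + fsc (- b) w = fsc (u * (a - b)) basis_H"
      "ind_act G h w + fsc (- a) w = fsc (v * (b - a)) basis_Ht"
      unfolding hw by (simp_all add: w fun_eq_iff algebra_simps)
    ultimately have Hu: "fsc (u * (a - b)) basis_H \<in> W" and Hv: "fsc (v * (b - a)) basis_Ht \<in> W"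
      by simp_all
    have "basis_H \<in> W \<and> basis_Ht \<in> W"
    proof (cases "u = 0")
      case False
      then have "basis_H \<in> W" using W(4)[OF Hu, of "1 / (u * (a - b))"] differs by (simp add: a_def b_def)
      then show ?thesis using W(5)[OF t_closed] ind_act_t_basis_H by metis
    next
      case True
      then have "v \<noteq> 0" using \<open>w \<noteq> 0\<close> w by auto
      then have "basis_Ht \<in> W" using W(4)[OF Hv, of "1 / (v * (b - a))"] differs by (simp add: a_def b_def)
      then show ?thesis using W(5)[OF t_closed] ind_act_t_basis_Ht by metis
    qed
    then have "ind_space G H \<psi> \<subseteq> W" using ind_space_decomp W(3,4) by (metis subsetI)
    then show ?thesis using W(1) by blast
  qed simp
qed

lemma ind_act_eigen_if_conjugate_invariant:
  assumes conj: "\<And>h. h \<in> H \<Longrightarrow> \<psi> (t \<otimes> h \<otimes> t') = \<psi> h"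
    and g: "g \<in> carrier G" and s: "s = 1 \<or> s = -1"
  shows "\<exists>c. ind_act G g (basis_H + fsc s basis_Ht) = fsc c (basis_H + fsc s basis_Ht)"
proof -
  have on_H: "ind_act G h (basis_H + fsc s basis_Ht) = fsc (\<psi> h) (basis_H + fsc s basis_Ht)" if "h \<in> H" for h
    using that conj by (simp add: ind_act_add ind_act_fsc ind_act_basis_H ind_act_basis_Ht fun_eq_iff algebra_simps)
  have on_t: "ind_act G t (basis_H + fsc s basis_Ht) = fsc s (basis_H + fsc s basis_Ht)"
    using s by (auto simp: ind_act_add ind_act_fsc ind_act_t_basis_H ind_act_t_basis_Ht fun_eq_iff)
  show ?thesis
  proof (cases "g \<in> H")
    case False
    then have "g = g \<otimes> t' \<otimes> t" "g \<otimes> t' \<in> H" using coset_decomp g by simp_all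
    then have "ind_act G g (basis_H + fsc s basis_Ht) = fsc (\<psi> (g \<otimes> t') * s) (basis_H + fsc s basis_Ht)"
      using ind_act_mult[of "g \<otimes> t'" t] on_H on_t g t_closed t'_closed
      by (metis fsc_fsc ind_act_fsc m_closed mult.commute)
    then show ?thesis by blast
  qed (use on_H in blast)
qed

text \<open>The summands are the eigenlines of \<open>t\<close> for the eigenvalues \<open>1\<close> and \<open>-1\<close>.\<close>
lemma decomposition_if_conjugate_invariant:
  assumes conj: "\<And>h. h \<in> H \<Longrightarrow> \<psi> (t \<otimes> h \<otimes> t') = \<psi> h"
  shows "\<not> irreducible_rep G (ind_act G) (ind_space G H \<psi>) \<and>
    (\<exists>W1 W2. invariant_subspace G (ind_act G) (ind_space G H \<psi>) W1 \<and>
      invariant_subspace G (ind_act G) (ind_space G H \<psi>) W2 \<and>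
      irreducible_rep G (ind_act G) W1 \<and> irreducible_rep G (ind_act G) W2 \<and>
      W1 \<inter> W2 = {0} \<and> {w1 + w2 | w1 w2. w1 \<in> W1 \<and> w2 \<in> W2} = ind_space G H \<psi> \<and>
      \<not> rep_iso G (ind_act G) W1 W2)"
proof -
  define V where "V = ind_space G H \<psi>"
  define p m where "p = basis_H + fsc 1 basis_Ht" and "m = basis_H + fsc (-1) basis_Ht"
  define W1 W2 where "W1 = complex_line p" and "W2 = complex_line m"
  have rep: "complex_rep G (ind_act G) V" unfolding V_def using complex_rep_ind_space[OF subset] .
  then have V: "\<And>x y. x \<in> V \<Longrightarrow> y \<in> V \<Longrightarrow> x + y \<in> V" "\<And>c x. x \<in> V \<Longrightarrow> fsc c x \<in> V"
    by (auto simp: complex_rep_def subspace_fsc_iff)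
  have pm: "p \<in> V" "m \<in> V" unfolding p_def m_def V_def using V basis_H_mem basis_Ht_mem V_def by auto
  have vals: "p \<one> = 1" "p t = 1" "m \<one> = 1" "m t = -1" by (simp_all add: p_def m_def basis_values)
  then have "p \<noteq> 0" "m \<noteq> 0" by (metis zero_fun_def zero_neq_one)+
  have "\<exists>c. ind_act G g p = fsc c p" "\<exists>c. ind_act G g m = fsc c m" if "g \<in> carrier G" for g
    using ind_act_eigen_if_conjugate_invariant[OF conj that] unfolding p_def m_def by blast+
  then have inv: "invariant_subspace G (ind_act G) V W1" "invariant_subspace G (ind_act G) V W2"
    unfolding W1_def W2_def using invariant_subspace_complex_line[OF rep] pm by simp_all
  have irr: "irreducible_rep G (ind_act G) W1" "irreducible_rep G (ind_act G) W2"
    unfolding W1_def W2_def using irreducible_rep_complex_line \<open>p \<noteq> 0\<close> \<open>m \<noteq> 0\<close> by blast+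
  have disj: "W1 \<inter> W2 = {0}"
  proof -
    have "u = 0" if e: "fsc u p = fsc v m" for u v
      using fun_cong[OF e, of \<one>] fun_cong[OF e, of t] vals by simp
    then have "x = 0" if "x \<in> W1" "x \<in> W2" for x
      using that unfolding W1_def W2_def mem_complex_line_iff by force
    then show ?thesis unfolding W1_def W2_def by auto
  qed
  have sum: "{w1 + w2 | w1 w2. w1 \<in> W1 \<and> w2 \<in> W2} = V"
  proof
    show "{w1 + w2 | w1 w2. w1 \<in> W1 \<and> w2 \<in> W2} \<subseteq> V"
      using inv V(1) unfolding invariant_subspace_def by blast
    show "V \<subseteq> {w1 + w2 | w1 w2. w1 \<in> W1 \<and> w2 \<in> W2}"
    proof
      fix f assume "f \<in> V"
      then have f: "f = fsc (f \<one>) basis_H + fsc (f t) basis_Ht"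
        unfolding V_def by (rule ind_space_decomp)
      have "f = fsc ((f \<one> + f t) / 2) p + fsc ((f \<one> - f t) / 2) m"
        unfolding p_def m_def by (subst f) (simp add: fun_eq_iff field_simps)
      moreover have "fsc ((f \<one> + f t) / 2) p \<in> W1" "fsc ((f \<one> - f t) / 2) m \<in> W2"
        unfolding W1_def W2_def by simp_all
      ultimately show "f \<in> {w1 + w2 | w1 w2. w1 \<in> W1 \<and> w2 \<in> W2}" by blast
    qed
  qed
  have "\<not> irreducible_rep G (ind_act G) V"
  proof
    assume "irreducible_rep G (ind_act G) V"
    then have "W1 = V" using inv(1) irr(1) unfolding irreducible_rep_def by blast
    then show False using disj pm(2) \<open>m \<noteq> 0\<close> self_mem_complex_line[of m] unfolding W2_def by blast
  qed
  moreover have "ind_act G t p = fsc 1 p" "ind_act G t m = fsc (-1) m"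
    unfolding p_def m_def
    by (simp_all add: ind_act_add ind_act_fsc ind_act_t_basis_H ind_act_t_basis_Ht fun_eq_iff)
  then have "\<not> rep_iso G (ind_act G) W1 W2"
    unfolding W1_def W2_def using not_rep_iso_complex_lines[OF rep pm(2) t_closed _ _ _ \<open>p \<noteq> 0\<close>]
    by (metis one_neq_neg_one)
  ultimately show ?thesis using inv irr disj sum unfolding V_def by blast
qed

end

section \<open>The representation \<open>\<gamma>\<close>\<close>

definition T_mp :: mp where "T_mp = ((1, 1, 0, 1), 1)"
definition T_inv_mp :: mp where "T_inv_mp = ((1, -1, 0, 1), 1)"

lemma cbar_translation_left: "mdet g = 1 \<Longrightarrow> cbar (1, k, 0, 1) g = 1"
  using cbar_conv_xfun_sign[of "(1, k, 0, 1)" g] mdet_mmul[of "(1, k, 0, 1)" g] by (cases g) auto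

lemma cbar_translation_right: "mdet g = 1 \<Longrightarrow> cbar g (1, k, 0, 1) = 1"
  using cbar_conv_xfun_sign[of g "(1, k, 0, 1)"] mdet_mmul[of g "(1, k, 0, 1)"] by (cases g) auto

lemma mp_conj_T:
  assumes "a * d - b * c = 1"
  shows "mp_mult (mp_mult T_mp ((a, b, c, d), e)) T_inv_mp = ((a + c, b + d - (a + c), c, d - c), e)"
proof -
  have "mdet (a + c, b + d, c, d) = 1" using assms by (simp add: algebra_simps)
  then show ?thesis
    using assms cbar_translation_left[of "(a, b, c, d)" 1] cbar_translation_right[of "(a + c, b + d, c, d)" "-1"]
    by (simp add: T_mp_def T_inv_mp_def algebra_simps)
qed

lemma lam_bar_translation: "dirichlet_char N \<chi> \<Longrightarrow> lam_bar \<chi> ((1, 2 * k, 0, 1), 1) = 1"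
  by (simp add: lam_bar_def lam_def Gamma2_def kron_def cong_iff_dvd_diff dirichlet_char_one)

lemma index_two_induction_Gamma0:
  assumes "even N" "dirichlet_char N \<chi>"
  shows "index_two_induction (mp_group (Gamma0 (N\<^sup>2))) (carrier (mp_group (Gamma_theta \<inter> Gamma0 (N\<^sup>2))))
    T_mp T_inv_mp (\<lambda>h. inverse (lam_bar \<chi> h))"
proof -
  have "4 dvd N\<^sup>2" "even (N\<^sup>2)" using assms(1) by (auto simp: power2_eq_square)
  show ?thesis
  proof (intro index_two_induction.intro monoid_mp_group_Gamma0 index_two_induction_axioms.intro)
    show "carrier (mp_group (Gamma_theta \<inter> Gamma0 (N\<^sup>2))) \<subseteq> carrier (mp_group (Gamma0 (N\<^sup>2)))"
      by (rule mp_theta_subset)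
    show "T_mp \<in> carrier (mp_group (Gamma0 (N\<^sup>2)))" "T_inv_mp \<in> carrier (mp_group (Gamma0 (N\<^sup>2)))"
      by (simp_all add: T_mp_def T_inv_mp_def carrier_mp_group_iff)
    then show "T_mp \<notin> carrier (mp_group (Gamma_theta \<inter> Gamma0 (N\<^sup>2)))"
      using mem_mp_theta_iff[OF \<open>even (N\<^sup>2)\<close>] by (simp add: T_mp_def)
    show "T_mp \<otimes>\<^bsub>mp_group (Gamma0 (N\<^sup>2))\<^esub> T_inv_mp = \<one>\<^bsub>mp_group (Gamma0 (N\<^sup>2))\<^esub>"
      "T_inv_mp \<otimes>\<^bsub>mp_group (Gamma0 (N\<^sup>2))\<^esub> T_mp = \<one>\<^bsub>mp_group (Gamma0 (N\<^sup>2))\<^esub>"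
      using cbar_translation_right[of "(1, 1, 0, 1)" "-1"] cbar_translation_right[of "(1, -1, 0, 1)" 1]
      by (simp_all add: T_mp_def T_inv_mp_def)
  next
    fix x y
    assume "x \<in> carrier (mp_group (Gamma0 (N\<^sup>2)))" "y \<in> carrier (mp_group (Gamma0 (N\<^sup>2)))"
    then show "x \<otimes>\<^bsub>mp_group (Gamma0 (N\<^sup>2))\<^esub> y \<in> carrier (mp_group (Gamma_theta \<inter> Gamma0 (N\<^sup>2)))
      \<longleftrightarrow> (x \<in> carrier (mp_group (Gamma_theta \<inter> Gamma0 (N\<^sup>2))) \<longleftrightarrow> y \<in> carrier (mp_group (Gamma_theta \<inter> Gamma0 (N\<^sup>2))))"
      using mp_mult_mem_theta_iff[OF \<open>even (N\<^sup>2)\<close>] by simp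
  next
    fix x y
    assume "x \<in> carrier (mp_group (Gamma_theta \<inter> Gamma0 (N\<^sup>2)))" "y \<in> carrier (mp_group (Gamma_theta \<inter> Gamma0 (N\<^sup>2)))"
    then show "inverse (lam_bar \<chi> (x \<otimes>\<^bsub>mp_group (Gamma0 (N\<^sup>2))\<^esub> y)) = inverse (lam_bar \<chi> x) * inverse (lam_bar \<chi> y)"
      using lam_bar_mult[OF \<open>4 dvd N\<^sup>2\<close> _ assms(2)] by (simp add: power2_eq_square)
  next
    show "inverse (lam_bar \<chi> \<one>\<^bsub>mp_group (Gamma0 (N\<^sup>2))\<^esub>) = 1"
      using lam_bar_translation[OF assms(2), of 0] by simp
    show "inverse (lam_bar \<chi> (T_mp \<otimes>\<^bsub>mp_group (Gamma0 (N\<^sup>2))\<^esub> T_mp)) = 1"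
      using lam_bar_translation[OF assms(2), of 1] cbar_translation_right[of "(1, 1, 0, 1)" 1]
      by (simp add: T_mp_def)
  qed
qed

lemma mp_conj_T_mem_theta:
  assumes "even M" "((a, b, c, d), e) \<in> carrier (mp_group (Gamma_theta \<inter> Gamma0 M))"
  shows "((a + c, b + d - (a + c), c, d - c), e) \<in> carrier (mp_group (Gamma_theta \<inter> Gamma0 M))"
proof -
  have "(a, b, c, d) \<in> Gamma0 M" "even b" "e = 1 \<or> e = -1"
    using assms mem_mp_theta_iff by (auto simp: carrier_mp_group_iff)
  moreover note Gamma0_entries[OF this(1) assms(1)]
  ultimately have "(a + c, b + d - (a + c), c, d - c) \<in> Gamma0 M" "even (b + d - (a + c))"
    "e = 1 \<or> e = -1"
    by (simp_all add: algebra_simps)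
  then show ?thesis
    by (intro mem_mp_theta_iff[OF assms(1), THEN iffD2] conjI) (simp_all add: carrier_mp_group_iff)
qed

lemma lam_bar_conj_T_if_4_dvd:
  assumes "4 dvd N" "dirichlet_char N \<chi>" "h \<in> carrier (mp_group (Gamma_theta \<inter> Gamma0 (N\<^sup>2)))"
  shows "lam_bar \<chi> (mp_mult (mp_mult T_mp h) T_inv_mp) = lam_bar \<chi> h"
proof -
  obtain a b c d e where h: "h = ((a, b, c, d), e)" by (cases h) auto
  have "16 dvd N\<^sup>2" using assms(1) by (auto simp: power2_eq_square intro: mult_dvd_mono)
  have "even N" using assms(1) dvd_trans[of 2 4 N] by simp
  then have "4 dvd N\<^sup>2" "even (N\<^sup>2)" by (auto simp: power2_eq_square)
  have G: "(a, b, c, d) \<in> Gamma0 (N\<^sup>2)"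
    using assms(3) mem_mp_theta_iff[OF \<open>even (N\<^sup>2)\<close>] by (simp add: h carrier_mp_group_iff)
  then have "16 dvd c" "N dvd c" using \<open>16 dvd N\<^sup>2\<close> by (auto intro: dvd_trans simp: power2_eq_square)
  then have "[d - c = d] (mod 8)" "[d - c = d] (mod c)" "[d - c = d] (mod 4)" "[d - c = d] (mod N)"
    by (auto simp: cong_iff_dvd_diff intro: dvd_trans[of _ 16])
  moreover have "kron c (d - c) = kron c d"
    using \<open>16 dvd c\<close> \<open>[d - c = d] (mod c)\<close> Gamma0_entries(4)[OF G \<open>even (N\<^sup>2)\<close>]
    by (intro kron_periodic_mod) (auto intro: dvd_trans[of _ 16])
  ultimately show ?thesis
    using lam_bar_theta[OF \<open>4 dvd N\<^sup>2\<close> assms(3)[unfolded h]]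
      lam_bar_theta[OF \<open>4 dvd N\<^sup>2\<close> mp_conj_T_mem_theta[OF \<open>even (N\<^sup>2)\<close> assms(3)[unfolded h]]]
      mp_conj_T chi8_cong eps_cong dirichlet_char_cong[OF assms(2)] G
    by (simp add: h)
qed

lemma lam_bar_conj_T_if_2_mod_4:
  assumes "[N = 2] (mod 4)" "dirichlet_char N \<chi>"
  defines "h \<equiv> ((1, 0, N\<^sup>2, 1), 1)"
  shows "h \<in> carrier (mp_group (Gamma_theta \<inter> Gamma0 (N\<^sup>2)))" "lam_bar \<chi> h = 1"
    "lam_bar \<chi> (mp_mult (mp_mult T_mp h) T_inv_mp) = -1"
proof -
  obtain k where "N - 2 = 4 * k" using assms(1) by (auto simp: cong_iff_dvd_diff elim: dvdE)
  then have k: "N = 4 * k + 2" by simp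
  have "even N" using k by simp
  then have "4 dvd N\<^sup>2" "even (N\<^sup>2)" by (auto simp: power2_eq_square)
  show H: "h \<in> carrier (mp_group (Gamma_theta \<inter> Gamma0 (N\<^sup>2)))"
    using \<open>even N\<close> by (simp add: h_def carrier_mp_group_iff Gamma_theta_def)
  show "lam_bar \<chi> h = 1"
    using lam_bar_theta[OF \<open>4 dvd N\<^sup>2\<close> H[unfolded h_def]] dirichlet_char_one[OF assms(2)]
    by (simp add: h_def chi8_def kron_def)
  have eq: "1 - N\<^sup>2 = 5 + 8 * (- (2 * k\<^sup>2 + 2 * k + 1))"
    unfolding k by (simp add: power2_eq_square algebra_simps)
  have "(1 - N\<^sup>2) mod 8 = 5" unfolding eq mod_mult_self2 by simp
  then have "chi8 (1 - N\<^sup>2) = -1" by (simp add: chi8_def)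
  moreover have "kron (N\<^sup>2) (1 - N\<^sup>2) = kron (N\<^sup>2) 1"
    using \<open>4 dvd N\<^sup>2\<close> by (intro kron_periodic_mod) (simp_all add: cong_iff_dvd_diff)
  moreover have "eps (1 - N\<^sup>2) = eps 1"
    using \<open>4 dvd N\<^sup>2\<close> by (intro eps_cong) (simp add: cong_iff_dvd_diff)
  moreover have "\<chi> (1 - N\<^sup>2) = 1"
    using dirichlet_char_cong[OF assms(2), of "1 - N\<^sup>2" 1] dirichlet_char_one[OF assms(2)]
    by (simp add: cong_iff_dvd_diff power2_eq_square)
  ultimately show "lam_bar \<chi> (mp_mult (mp_mult T_mp h) T_inv_mp) = -1"
    using lam_bar_theta[OF \<open>4 dvd N\<^sup>2\<close> mp_conj_T_mem_theta[OF \<open>even (N\<^sup>2)\<close> H[unfolded h_def]]]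
    by (simp add: h_def mp_conj_T kron_def)
qed

theorem mainTheorem11:
  fixes N :: int and \<chi> :: "int \<Rightarrow> complex"
  assumes "N \<ge> 2" and "even N" and "primitive_dirichlet_char N \<chi>"
  defines "G \<equiv> mp_group (Gamma0 (N^2))"
      and "H \<equiv> carrier (mp_group (Gamma_theta \<inter> Gamma0 (N^2)))"
  defines "V \<equiv> ind_space G H (\<lambda>h. inverse (lam_bar \<chi> h))"
  shows "([N = 2] (mod 4) \<longrightarrow>
           complex_rep G (ind_act G) V \<and> rep_dim V = 2 \<and> irreducible_rep G (ind_act G) V) \<and>
         ([N = 0] (mod 4) \<longrightarrow>
           complex_rep G (ind_act G) V \<and> rep_dim V = 2 \<and> \<not> irreducible_rep G (ind_act G) V \<and>
           (\<exists>W1 W2. invariant_subspace G (ind_act G) V W1 \<and> invariant_subspace G (ind_act G) V W2 \<and>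
              irreducible_rep G (ind_act G) W1 \<and> irreducible_rep G (ind_act G) W2 \<and>
              W1 \<inter> W2 = {0} \<and> {w1 + w2 | w1 w2. w1 \<in> W1 \<and> w2 \<in> W2} = V \<and>
              \<not> rep_iso G (ind_act G) W1 W2))"
proof -
  have \<chi>: "dirichlet_char N \<chi>"
    using assms(3) by (simp add: primitive_dirichlet_char_def)
  interpret index_two_induction G H T_mp T_inv_mp "\<lambda>h. inverse (lam_bar \<chi> h)"
    unfolding G_def H_def using index_two_induction_Gamma0[OF assms(2) \<chi>] .
  have rep: "complex_rep G (ind_act G) V \<and> rep_dim V = 2"
    unfolding V_def using complex_rep_ind_space[OF subset] rep_dim_ind_space by simp
  show ?thesis (is "(_ \<longrightarrow> ?irreducible) \<and> (_ \<longrightarrow> ?decomposable)")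
  proof (rule conjI; rule impI)
    assume "[N = 2] (mod 4)"
    note h = lam_bar_conj_T_if_2_mod_4[OF this \<chi>]
    show ?irreducible
      using rep irreducible_if_conjugate_differs[OF h(1)[folded H_def]] h(2,3)
      unfolding V_def G_def by simp
  next
    assume "[N = 0] (mod 4)"
    then have "inverse (lam_bar \<chi> (T_mp \<otimes>\<^bsub>G\<^esub> h \<otimes>\<^bsub>G\<^esub> T_inv_mp)) = inverse (lam_bar \<chi> h)"
      if "h \<in> H" for h
      using lam_bar_conj_T_if_4_dvd[OF _ \<chi> that[unfolded H_def]] unfolding G_def by (simp add: cong_0_iff)
    then show ?decomposable
      using rep decomposition_if_conjugate_invariant unfolding V_def by simp
  qed
qed

end
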